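(* Let $A=kQ/I$ be a toupie algebra over a field $k$ of characteristic zero. If $a>0$, the classes of the elements $y_i$ (for the branches $\alpha^{(i)}$ containing monomial relations), $w_{pq}$ ($p\ne q$, $1\le p,q\le a$), $z_{us}$ ($1\le u\le a$, $\alpha^{(s)}\in{}_0\mathcal{B}_\omega\setminus Z$), $x_j$ ($2\le j\le a$) and $t_k$ ($1\le k\le r$) form a basis of $\mathrm{HH}^1(A)=\ker D_1/\operatorname{Im}D_0$. If $a=0$, let $\alpha^{(B)}$ be the last branch in the numbering; then the classes of all the elements $y_i$ and $t_k$ except the unique one among them having $\alpha^B_0\|\alpha^B_0$ as a summand form a basis of $\mathrm{HH}^1(A)$.
   Context: A finite quiver $Q$ is a toupie quiver if it has a unique source $0$, a unique sink $\omega$, and every other vertex is the source of exactly one arrow and the target of exactly one arrow. Paths are composed left to right. A branch is a path from $0$ to $\omega$; the arrows of a branch $\alpha^{(i)}$ are $\alpha^i_0,\alpha^i_1,\dots$ in order, $\alpha^i_0$ starting at $0$. A toupie algebra is $A=kQ/I$ with $Q$ toupie and $I$ an admissible ideal generated by monomial relations (paths inside one branch) and non-monomial relations (linear combinations of branches). Branches are numbered: $Z=\{\alpha^{(1)},\dots,\alpha^{(a)}\}$ the arrows from $0$ to $\omega$; then the $l$ branches of length $\ge2$ in no relation; then the $m$ branches containing monomial relations; then the $n$ branches involved in non-monomial relations. The non-monomial relations have coefficient matrix in reduced row echelon form, $\rho_i=\alpha^{(k_i)}+\sum_{j>k_i}b_{ij}\alpha^{(j)}$; $R$ is a minimal generating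 set of $I$ formed by these $\rho_i$ and monomial relations. $E=kQ_0$, $e_x$ trivial path at $x$, $D=\dim e_0Ae_\omega$, ${}_0\mathcal{B}_\omega$ the set of classes of branches containing no monomial relation and different from all $\alpha^{(k_i)}$. $Q_\rho$ is the graph whose vertices are branches of length $\ge2$ containing no monomial relation, with an edge between two of them if some $\rho_i$ involves both; $Q_\rho^1,\dots,Q_\rho^r$ are its connected components. For an arrow $\gamma$ and $h\in e_{s(\gamma)}Ae_{t(\gamma)}$, $\gamma\|h$ is the $E$-bimodule map $kQ_1\to A$ sending $\gamma$ to $h$, other arrows to $0$. $D_0:\mathrm{Hom}_{E^e}(E,A)\to\mathrm{Hom}_{E^e}(kQ_1,A)$, $D_0(e_x\|e_x)=\sum_{t(\gamma)=x}\gamma\|\gamma-\sum_{s(\gamma)=x}\gamma\|\gamma$; $D_1:\mathrm{Hom}_{E^e}(kQ_1,A)\to\mathrm{Hom}_{E^e}(kR,A)$, $D_1(f)(r)=\sum r^{(1)}f(r^{(2)})r^{(3)}$ (sum over factorizations of the paths of $r$ with $r^{(2)}$ an arrow, extended linearly). Elements: $y_i=\alpha^i_0\|\alpha^i_0$; $w_{pq}=\alpha^{(p)}\|\alpha^{(q)}$; $z_{us}=\alpha^{(u)}\|\alpha^{(s)}$; $x_j=\alpha^{(j)}\|\alpha^{(j)}-\alpha^{(1)}\|\alpha^{(1)}$; $t_k=\sum_{\alpha^{(i)}\in Q_\rho^k}\alpha^i_0\|\alpha^i_0$. *)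

theory Defs
  imports Main
begin

text \<open>A toupie quiver is encoded by the list ls of branch lengths: branch i
(0-indexed, i < length ls) is a path of length ls!i >= 1 from the source Src
to the sink Snk.  Its arrows are (i,j), j < ls!i, the arrow (i,j) being the
j-th arrow alpha^i_j of the branch.\<close>

datatype vert = Src | Snk | Mid nat nat

text \<open>Paths: trivial paths Triv x, and Pth i j l = alpha^i_j ... alpha^i_(l-1)
(arrows j..l-1 of branch i, j < l).\<close>
datatype path = Triv vert | Pth nat nat nat

type_synonym 'k kq = "path \<Rightarrow> 'k"            \<comment> \<open>elements of kQ, coefficients on paths\<close>
type_synonym 'k hom1 = "nat \<times> nat \<Rightarrow> path \<Rightarrow> 'k"  \<comment> \<open>maps kQ_1 -> kQ, arrow-wise\<close>

definition vtx :: "nat list \<Rightarrow> nat \<Rightarrow> nat \<Rightarrow> vert" where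
  "vtx ls i j = (if j = 0 then Src else if j = ls ! i then Snk else Mid i j)"

definition verts :: "nat list \<Rightarrow> vert set" where
  "verts ls = {Src, Snk} \<union> {Mid i j | i j. i < length ls \<and> 0 < j \<and> j < ls ! i}"

definition arrows :: "nat list \<Rightarrow> (nat \<times> nat) set" where
  "arrows ls = {(i, j). i < length ls \<and> j < ls ! i}"

fun asrc :: "nat list \<Rightarrow> nat \<times> nat \<Rightarrow> vert" where
  "asrc ls (i, j) = vtx ls i j"

fun atgt :: "nat list \<Rightarrow> nat \<times> nat \<Rightarrow> vert" where
  "atgt ls (i, j) = vtx ls i (Suc j)"

fun arrp :: "nat \<times> nat \<Rightarrow> path" where
  "arrp (i, j) = Pth i j (Suc j)"

definition paths :: "nat list \<Rightarrow> path set" where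
  "paths ls = Triv ` verts ls \<union> {Pth i j l | i j l. i < length ls \<and> j < l \<and> l \<le> ls ! i}"

fun psrc :: "nat list \<Rightarrow> path \<Rightarrow> vert" where
  "psrc ls (Triv x) = x"
| "psrc ls (Pth i j l) = vtx ls i j"

fun ptgt :: "nat list \<Rightarrow> path \<Rightarrow> vert" where
  "ptgt ls (Triv x) = x"
| "ptgt ls (Pth i j l) = vtx ls i l"

text \<open>Concatenation of paths (left to right composition).\<close>
fun pcat :: "nat list \<Rightarrow> path \<Rightarrow> path \<Rightarrow> path option" where
  "pcat ls (Triv x) q = (if psrc ls q = x then Some q else None)"
| "pcat ls (Pth i j l) (Triv y) = (if vtx ls i l = y then Some (Pth i j l) else None)"
| "pcat ls (Pth i j l) (Pth i' j' l') = (if i = i' \<and> l = j' then Some (Pth i j l') else None)"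

definition delta :: "path \<Rightarrow> 'k::field kq" where
  "delta p = (\<lambda>q. if q = p then 1 else 0)"

definition mul :: "nat list \<Rightarrow> 'k::field kq \<Rightarrow> 'k kq \<Rightarrow> 'k kq" where
  "mul ls u v = (\<lambda>p. \<Sum>qq \<in> {(q1, q2). q1 \<in> paths ls \<and> q2 \<in> paths ls \<and> pcat ls q1 q2 = Some p}.
                        u (fst qq) * v (snd qq))"

definition in_eAe :: "nat list \<Rightarrow> vert \<Rightarrow> vert \<Rightarrow> 'k::field kq \<Rightarrow> bool" where
  "in_eAe ls x y u = (\<forall>p. u p \<noteq> 0 \<longrightarrow> p \<in> paths ls \<and> psrc ls p = x \<and> ptgt ls p = y)"

definition inI :: "nat list \<Rightarrow> 'k::field kq set \<Rightarrow> 'k kq \<Rightarrow> bool" where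
  "inI ls R u = (\<exists>c. u = (\<lambda>q. \<Sum>t \<in> paths ls \<times> R \<times> paths ls.
        c t * mul ls (mul ls (delta (fst t)) (fst (snd t))) (delta (snd (snd t))) q))"

text \<open>Hom_{E^e}(kQ_1, A), with values represented in kQ (modulo I).\<close>
definition hom1 :: "nat list \<Rightarrow> 'k::field hom1 \<Rightarrow> bool" where
  "hom1 ls f = (\<forall>\<gamma>. (\<gamma> \<in> arrows ls \<longrightarrow> in_eAe ls (asrc ls \<gamma>) (atgt ls \<gamma>) (f \<gamma>))
                   \<and> (\<gamma> \<notin> arrows ls \<longrightarrow> f \<gamma> = (\<lambda>_. 0)))"

definition hom0 :: "nat list \<Rightarrow> (vert \<Rightarrow> 'k::field kq) \<Rightarrow> bool" where
  "hom0 ls g = (\<forall>x. (x \<in> verts ls \<longrightarrow> in_eAe ls x x (g x)) \<and> (x \<notin> verts ls \<longrightarrow> g x = (\<lambda>_. 0)))"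

text \<open>D_0, the linear extension of
  D_0(e_x||e_x) = sum_{t(gamma)=x} gamma||gamma - sum_{s(gamma)=x} gamma||gamma.\<close>
definition D0 :: "nat list \<Rightarrow> (vert \<Rightarrow> 'k::field kq) \<Rightarrow> 'k hom1" where
  "D0 ls g = (\<lambda>\<gamma>. if \<gamma> \<in> arrows ls
      then (\<lambda>p. mul ls (delta (arrp \<gamma>)) (g (atgt ls \<gamma>)) p - mul ls (g (asrc ls \<gamma>)) (delta (arrp \<gamma>)) p)
      else (\<lambda>_. 0))"

definition sp :: "nat list \<Rightarrow> nat \<Rightarrow> nat \<Rightarrow> nat \<Rightarrow> path" where
  "sp ls i j h = (if j = h then Triv (vtx ls i j) else Pth i j h)"

fun D1p :: "nat list \<Rightarrow> 'k::field hom1 \<Rightarrow> path \<Rightarrow> 'k kq" where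
  "D1p ls f (Triv x) = (\<lambda>_. 0)"
| "D1p ls f (Pth i j l) = (\<lambda>q. \<Sum>h \<in> {j..<l}.
      mul ls (mul ls (delta (sp ls i j h)) (f (i, h))) (delta (sp ls i (Suc h) l)) q)"

text \<open>D_1(f)(r) = sum r^(1) f(r^(2)) r^(3), extended linearly.\<close>
definition D1 :: "nat list \<Rightarrow> 'k::field hom1 \<Rightarrow> 'k kq \<Rightarrow> 'k kq" where
  "D1 ls f r = (\<lambda>q. \<Sum>p \<in> paths ls. r p * D1p ls f p q)"

definition kerD1 :: "nat list \<Rightarrow> 'k::field kq set \<Rightarrow> 'k hom1 \<Rightarrow> bool" where
  "kerD1 ls R f = (hom1 ls f \<and> (\<forall>r \<in> R. inI ls R (D1 ls f r)))"

text \<open>Equality in Hom_{E^e}(kQ_1, A) = Hom_{E^e}(kQ_1, kQ/I).\<close>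
definition equivA :: "nat list \<Rightarrow> 'k::field kq set \<Rightarrow> 'k hom1 \<Rightarrow> 'k hom1 \<Rightarrow> bool" where
  "equivA ls R f g = (\<forall>\<gamma> \<in> arrows ls. inI ls R (\<lambda>p. f \<gamma> p - g \<gamma> p))"

definition lincomb :: "'i set \<Rightarrow> ('i \<Rightarrow> 'k::field) \<Rightarrow> ('i \<Rightarrow> 'k hom1) \<Rightarrow> 'k hom1" where
  "lincomb S c v = (\<lambda>\<gamma> p. \<Sum>j \<in> S. c j * v j \<gamma> p)"

definition classes_basis :: "nat list \<Rightarrow> 'k::field kq set \<Rightarrow> 'i set \<Rightarrow> ('i \<Rightarrow> 'k hom1) \<Rightarrow> bool" where
  "classes_basis ls R S v =
     (finite S \<and> (\<forall>j \<in> S. kerD1 ls R (v j))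
      \<and> (\<forall>c g. hom0 ls g \<and> equivA ls R (lincomb S c v) (D0 ls g) \<longrightarrow> (\<forall>j \<in> S. c j = 0))
      \<and> (\<forall>f. kerD1 ls R f \<longrightarrow>
             (\<exists>c g. hom0 ls g \<and> equivA ls R f (\<lambda>\<gamma> p. lincomb S c v \<gamma> p + D0 ls g \<gamma> p))))"

text \<open>Monomial relations: Mon is a set of triples (i,j,l) standing for Pth i j l.
Non-monomial relations rho_s (s < nr): rho_s = sum_i b s i * (branch i).\<close>

definition has_mon :: "(nat \<times> nat \<times> nat) set \<Rightarrow> nat \<Rightarrow> bool" where
  "has_mon Mon i = (\<exists>j l. (i, j, l) \<in> Mon)"

definition branch :: "nat list \<Rightarrow> nat \<Rightarrow> 'k::field kq" where
  "branch ls i = delta (Pth i 0 (ls ! i))"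

definition rho :: "nat list \<Rightarrow> (nat \<Rightarrow> nat \<Rightarrow> 'k::field) \<Rightarrow> nat \<Rightarrow> 'k kq" where
  "rho ls b s = (\<lambda>q. \<Sum>i < length ls. b s i * branch ls i q)"

definition rels :: "nat list \<Rightarrow> (nat \<times> nat \<times> nat) set \<Rightarrow> nat \<Rightarrow> (nat \<Rightarrow> nat \<Rightarrow> 'k::field) \<Rightarrow> 'k kq set" where
  "rels ls Mon nr b = (\<lambda>(i, j, l). delta (Pth i j l)) ` Mon \<union> rho ls b ` {..<nr}"

text \<open>The standing conventions: branches 0..a-1 are the arrows 0 -> omega,
a..a+l-1 the branches of length >= 2 in no relation, a+l..a+l+m-1 those
containing monomial relations, a+l+m..a+l+m+n-1 those involved in
non-monomial relations; the coefficient matrix b is in reduced row echelon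
form with pivot columns kp s; the relations form a minimal generating set.\<close>
definition toupie_pres :: "nat list \<Rightarrow> (nat \<times> nat \<times> nat) set \<Rightarrow> nat \<Rightarrow> (nat \<Rightarrow> nat \<Rightarrow> 'k::field)
     \<Rightarrow> (nat \<Rightarrow> nat) \<Rightarrow> nat \<Rightarrow> nat \<Rightarrow> nat \<Rightarrow> nat \<Rightarrow> bool" where
  "toupie_pres ls Mon nr b kp a l m n =
    (a + l + m + n = length ls \<and> 0 < length ls
     \<and> (\<forall>i < a. ls ! i = 1)
     \<and> (\<forall>i. a \<le> i \<and> i < length ls \<longrightarrow> 2 \<le> ls ! i)
     \<and> (\<forall>i j l'. (i, j, l') \<in> Mon \<longrightarrow> a + l \<le> i \<and> i < a + l + m \<and> j + 2 \<le> l' \<and> l' \<le> ls ! i)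
     \<and> (\<forall>i. a + l \<le> i \<and> i < a + l + m \<longrightarrow> has_mon Mon i)
     \<and> (\<forall>s < nr. \<forall>i. i < a + l + m \<or> length ls \<le> i \<longrightarrow> b s i = 0)
     \<and> (\<forall>i. a + l + m \<le> i \<and> i < length ls \<longrightarrow> (\<exists>s < nr. b s i \<noteq> 0))
     \<and> (\<forall>s < nr. \<exists>i. i \<noteq> kp s \<and> b s i \<noteq> 0)
     \<and> (\<forall>s < nr. b s (kp s) = 1 \<and> (\<forall>i < kp s. b s i = 0))
     \<and> (\<forall>s s'. s < s' \<and> s' < nr \<longrightarrow> kp s < kp s')
     \<and> (\<forall>s < nr. \<forall>s' < nr. s' \<noteq> s \<longrightarrow> b s' (kp s) = 0)
     \<and> (\<forall>R'. R' \<subset> rels ls Mon nr b \<longrightarrow> (\<exists>u. inI ls (rels ls Mon nr b) u \<and> \<not> inI ls R' u)))"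

datatype idx = Yi nat | Wi nat nat | Zi nat nat | Xi nat | Ti "nat set"

definition single :: "nat \<times> nat \<Rightarrow> 'k::field kq \<Rightarrow> 'k hom1" where
  "single \<gamma> h = (\<lambda>\<gamma>'. if \<gamma>' = \<gamma> then h else (\<lambda>_. 0))"

fun elem :: "nat list \<Rightarrow> idx \<Rightarrow> 'k::field hom1" where
  "elem ls (Yi i) = single (i, 0) (delta (arrp (i, 0)))"
| "elem ls (Wi p q) = single (p, 0) (branch ls q)"
| "elem ls (Zi u s) = single (u, 0) (branch ls s)"
| "elem ls (Xi j) = (\<lambda>\<gamma> p. single (j, 0) (branch ls j) \<gamma> p - single (0, 0) (branch ls 0) \<gamma> p)"
| "elem ls (Ti C) = (\<lambda>\<gamma> p. \<Sum>i \<in> C. single (i, 0) (delta (arrp (i, 0))) \<gamma> p)"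

definition Vrho :: "nat list \<Rightarrow> (nat \<times> nat \<times> nat) set \<Rightarrow> nat set" where
  "Vrho ls Mon = {i. i < length ls \<and> 2 \<le> ls ! i \<and> \<not> has_mon Mon i}"

definition Erho :: "nat list \<Rightarrow> (nat \<times> nat \<times> nat) set \<Rightarrow> nat \<Rightarrow> (nat \<Rightarrow> nat \<Rightarrow> 'k::field) \<Rightarrow> (nat \<times> nat) set" where
  "Erho ls Mon nr b = {(i, i'). i \<in> Vrho ls Mon \<and> i' \<in> Vrho ls Mon \<and> (\<exists>s < nr. b s i \<noteq> 0 \<and> b s i' \<noteq> 0)}"

definition comps :: "nat list \<Rightarrow> (nat \<times> nat \<times> nat) set \<Rightarrow> nat \<Rightarrow> (nat \<Rightarrow> nat \<Rightarrow> 'k::field) \<Rightarrow> nat set set" where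
  "comps ls Mon nr b = {(Erho ls Mon nr b)\<^sup>* `` {i} | i. i \<in> Vrho ls Mon}"

definition B0w :: "nat list \<Rightarrow> (nat \<times> nat \<times> nat) set \<Rightarrow> nat \<Rightarrow> (nat \<Rightarrow> nat) \<Rightarrow> nat set" where
  "B0w ls Mon nr kp = {s. s < length ls \<and> \<not> has_mon Mon s \<and> s \<notin> kp ` {..<nr}}"

definition idx_pos :: "nat list \<Rightarrow> (nat \<times> nat \<times> nat) set \<Rightarrow> nat \<Rightarrow> (nat \<Rightarrow> nat \<Rightarrow> 'k::field)
     \<Rightarrow> (nat \<Rightarrow> nat) \<Rightarrow> nat \<Rightarrow> idx set" where
  "idx_pos ls Mon nr b kp a =
     Yi ` {i. i < length ls \<and> has_mon Mon i}
     \<union> {Wi p q | p q. p \<noteq> q \<and> p < a \<and> q < a}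
     \<union> {Zi u s | u s. u < a \<and> s \<in> B0w ls Mon nr kp \<and> a \<le> s}
     \<union> Xi ` {1..<a}
     \<union> Ti ` comps ls Mon nr b"

text \<open>Whether the element contains alpha^B_0||alpha^B_0 (B the last branch) as a summand.\<close>
fun hasB :: "nat list \<Rightarrow> idx \<Rightarrow> bool" where
  "hasB ls (Yi i) = (i = length ls - 1)"
| "hasB ls (Ti C) = (length ls - 1 \<in> C)"
| "hasB ls _ = False"

definition idx_zero :: "nat list \<Rightarrow> (nat \<times> nat \<times> nat) set \<Rightarrow> nat \<Rightarrow> (nat \<Rightarrow> nat \<Rightarrow> 'k::field) \<Rightarrow> idx set" where
  "idx_zero ls Mon nr b =
     {j \<in> Yi ` {i. i < length ls \<and> has_mon Mon i} \<union> Ti ` comps ls Mon nr b. \<not> hasB ls j}"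

end

theory Submission
  imports Defs
begin

(* A cochain f is a scalar on every arrow of a branch of length at least 2, and a combination of
   branches on every arrow alpha^(u) from 0 to omega.  An element of I vanishes on arrows, and on the
   branches free of monomial relations its coefficients lie in the row space of the relation matrix.
   So f is a cocycle exactly when the sum of its coefficients along a branch is constant on each
   component of Q_rho, while a coboundary D_0 g contributes g(omega) - g(0) to every such sum.

   Spanning: subtract from f the combination of basis elements whose coefficients are read off f,
   together with the coboundary of a potential that telescopes along each long branch.
   Independence: if a combination is the coboundary D_0 g, comparing coefficients expresses every
   coefficient through e = g(omega) - g(0); the loop coefficients at the arrows alpha^(u) force
   a e = 0, so e = 0 in characteristic zero, and for a = 0 the omitted last branch forces
   e = 0 directly. *)

section \<open>The path algebra\<close>

lemma finite_verts: "finite (verts ls)"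
proof -
  have "{Mid i j | i j. i < length ls \<and> 0 < j \<and> j < ls ! i}
      \<subseteq> (\<lambda>(i, j). Mid i j) ` (SIGMA i:{..<length ls}. {..<ls ! i})"
    by auto
  then show ?thesis
    unfolding verts_def by (meson finite_Un finite.emptyI finite.insertI finite_SigmaI
        finite_imageI finite_lessThan finite_subset)
qed

lemma finite_paths: "finite (paths ls)"
proof -
  have "{Pth i j l | i j l. i < length ls \<and> j < l \<and> l \<le> ls ! i}
      \<subseteq> (\<lambda>(i, j, l). Pth i j l) ` (SIGMA i:{..<length ls}. {..<ls ! i} \<times> {..ls ! i})"
  proof clarify
    fix i j l assume "i < length ls" "j < l" "l \<le> ls ! i"
    then show "Pth i j l \<in> (\<lambda>(i, j, l). Pth i j l) ` (SIGMA i:{..<length ls}. {..<ls ! i} \<times> {..ls ! i})"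
      by (intro image_eqI[where x="(i, j, l)"]) auto
  qed
  then show ?thesis
    unfolding paths_def using finite_verts
    by (meson finite_Un finite_SigmaI finite_cartesian_product finite_atMost finite_imageI
        finite_lessThan finite_subset)
qed

lemma vtx_in_verts: "i < length ls \<Longrightarrow> j \<le> ls ! i \<Longrightarrow> vtx ls i j \<in> verts ls"
  unfolding vtx_def verts_def by auto

lemma vtx_eq_iff:
  assumes "i < length ls" "j \<le> ls ! i" "k < length ls" "h \<le> ls ! k" "0 < ls ! i" "0 < ls ! k"
  shows "vtx ls i j = vtx ls k h \<longleftrightarrow> (j = 0 \<and> h = 0) \<or> (j = ls ! i \<and> h = ls ! k) \<or> (i = k \<and> j = h)"
  using assms unfolding vtx_def by auto

lemma Src_verts: "Src \<in> verts ls" and Snk_verts: "Snk \<in> verts ls"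
  by (auto simp: verts_def)

lemma Pth_in_paths: "i < length ls \<Longrightarrow> j < l \<Longrightarrow> l \<le> ls ! i \<Longrightarrow> Pth i j l \<in> paths ls"
  unfolding paths_def by auto

lemma Triv_in_paths: "x \<in> verts ls \<Longrightarrow> Triv x \<in> paths ls"
  unfolding paths_def by auto

lemma Pth_in_pathsD: "Pth i j l \<in> paths ls \<Longrightarrow> i < length ls \<and> j < l \<and> l \<le> ls ! i"
  unfolding paths_def by auto

lemma sp_in_paths: "i < length ls \<Longrightarrow> j \<le> h \<Longrightarrow> h \<le> ls ! i \<Longrightarrow> sp ls i j h \<in> paths ls"
  by (auto simp: sp_def intro!: Pth_in_paths Triv_in_paths vtx_in_verts)

lemma delta_apply: "delta p q = (if q = p then 1 else 0)"
  by (simp add: delta_def)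

lemma mul_alt:
  "mul ls u v p = (\<Sum>x\<in>paths ls. \<Sum>y\<in>{y\<in>paths ls. pcat ls x y = Some p}. u x * v y)"
proof -
  have "{(q1, q2). q1 \<in> paths ls \<and> q2 \<in> paths ls \<and> pcat ls q1 q2 = Some p}
      = (SIGMA x:paths ls. {y\<in>paths ls. pcat ls x y = Some p})" by auto
  then show ?thesis
    unfolding mul_def by (subst sum.Sigma) (auto simp: finite_paths split_def)
qed

lemma mul_delta_left:
  "mul ls (delta q) v p = (if q \<in> paths ls then (\<Sum>y\<in>{y\<in>paths ls. pcat ls q y = Some p}. v y) else 0)"
proof -
  have "mul ls (delta q) v p
      = (\<Sum>x\<in>paths ls. if x = q then (\<Sum>y\<in>{y\<in>paths ls. pcat ls x y = Some p}. v y) else 0)"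
    unfolding mul_alt delta_def by (intro sum.cong) auto
  then show ?thesis by (simp add: sum.delta' finite_paths)
qed

lemma mul_delta_right:
  "mul ls u (delta q) p = (if q \<in> paths ls then (\<Sum>x\<in>{x\<in>paths ls. pcat ls x q = Some p}. u x) else 0)"
proof -
  have "mul ls u (delta q) p = (\<Sum>x\<in>paths ls. if q \<in> paths ls \<and> pcat ls x q = Some p then u x else 0)"
    unfolding mul_alt delta_def
    by (intro sum.cong refl) (simp add: finite_paths if_distrib[where f="\<lambda>t. u _ * t"] cong: if_cong)
  then show ?thesis by (simp add: sum.inter_filter[symmetric] finite_paths)
qed

lemma mul_Triv_left:
  assumes "x \<in> verts ls"
  shows "mul ls (delta (Triv x)) v p = (if p \<in> paths ls \<and> psrc ls p = x then v p else 0)"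
proof -
  have "{y\<in>paths ls. pcat ls (Triv x) y = Some p} = (if p \<in> paths ls \<and> psrc ls p = x then {p} else {})"
    by auto
  then show ?thesis using assms by (simp add: mul_delta_left Triv_in_paths)
qed

lemma mul_Triv_right:
  assumes "x \<in> verts ls"
  shows "mul ls v (delta (Triv x)) p = (if p \<in> paths ls \<and> ptgt ls p = x then v p else 0)"
proof -
  have "pcat ls y (Triv x) = Some p \<longleftrightarrow> ptgt ls y = x \<and> p = y" for y
    by (cases y) auto
  then have "{y\<in>paths ls. pcat ls y (Triv x) = Some p} = (if p \<in> paths ls \<and> ptgt ls p = x then {p} else {})"
    by auto
  then show ?thesis using assms by (simp add: mul_delta_right Triv_in_paths)
qed

lemma mul_delta_delta:
  assumes "x \<in> paths ls" "y \<in> paths ls" "pcat ls x y = Some z"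
  shows "mul ls (delta x) (delta y) = delta z"
proof
  fix p
  have "mul ls (delta x) (delta y) p = (\<Sum>y'\<in>{y'\<in>paths ls. pcat ls x y' = Some p}. if y' = y then 1 else 0)"
    using assms mul_delta_left[of ls x "delta y" p] by (simp add: delta_def)
  also have "\<dots> = (if pcat ls x y = Some p then 1 else 0)"
    using assms by (simp add: sum.delta finite_paths)
  finally show "mul ls (delta x) (delta y) p = delta z p"
    using assms(3) by (auto simp: delta_apply)
qed

lemma mul_smult_left: "mul ls (\<lambda>q. c * u q) v p = c * mul ls u v p"
  unfolding mul_def by (simp add: sum_distrib_left mult.assoc)

lemma mul_smult_right: "mul ls u (\<lambda>q. c * v q) p = c * mul ls u v p"
  unfolding mul_def by (simp add: sum_distrib_left mult.left_commute)

lemma mul_support: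
  assumes "mul ls u v p \<noteq> 0"
  obtains x y where "x \<in> paths ls" "y \<in> paths ls" "pcat ls x y = Some p" "u x \<noteq> 0" "v y \<noteq> 0"
proof -
  have "\<exists>x y. x \<in> paths ls \<and> y \<in> paths ls \<and> pcat ls x y = Some p \<and> u x \<noteq> 0 \<and> v y \<noteq> 0"
  proof (rule ccontr)
    assume "\<not> ?thesis"
    then have "mul ls u v p = 0" unfolding mul_def by (intro sum.neutral) auto
    with assms show False by simp
  qed
  then show ?thesis using that by blast
qed

fun plen :: "path \<Rightarrow> nat" where
  "plen (Triv x) = 0"
| "plen (Pth i j l) = l - j"

lemma plen_pcat:
  assumes "x \<in> paths ls" "y \<in> paths ls" "pcat ls x y = Some p"
  shows "plen p = plen x + plen y"
  using assms by (cases x; cases y) (auto split: if_splits dest!: Pth_in_pathsD)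

lemma pcat_right_Pth:
  assumes "x \<in> paths ls" "pcat ls x (Pth i j l) = Some p"
  shows "\<exists>j0\<le>j. p = Pth i j0 l"
  using assms by (cases x) (auto split: if_splits dest!: Pth_in_pathsD)

lemma pcat_left_Pth:
  assumes "y \<in> paths ls" "pcat ls (Pth i j l) y = Some p"
  shows "\<exists>l0\<ge>l. p = Pth i j l0"
  using assms by (cases y) (auto split: if_splits dest!: Pth_in_pathsD)

section \<open>Two-sided ideals generated by relations\<close>

definition gen_term :: "nat list \<Rightarrow> path \<times> 'k::field kq \<times> path \<Rightarrow> 'k kq" where
  "gen_term ls t = mul ls (mul ls (delta (fst t)) (fst (snd t))) (delta (snd (snd t)))"

lemma inI_gen_term:
  "inI ls R u \<longleftrightarrow> (\<exists>c. u = (\<lambda>q. \<Sum>t \<in> paths ls \<times> R \<times> paths ls. c t * gen_term ls t q))"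
  unfolding inI_def gen_term_def by simp

lemma inI_zero: "inI ls R (\<lambda>q. 0)"
  unfolding inI_gen_term by (rule exI[where x="\<lambda>_. 0"]) simp

lemma inI_add:
  assumes "inI ls R u" "inI ls R v"
  shows "inI ls R (\<lambda>q. u q + v q)"
proof -
  obtain c1 c2
    where "u = (\<lambda>q. \<Sum>t \<in> paths ls \<times> R \<times> paths ls. c1 t * gen_term ls t q)"
      and "v = (\<lambda>q. \<Sum>t \<in> paths ls \<times> R \<times> paths ls. c2 t * gen_term ls t q)"
    using assms unfolding inI_gen_term by blast
  then show ?thesis
    unfolding inI_gen_term
    by (intro exI[where x="\<lambda>t. c1 t + c2 t"]) (simp add: distrib_right sum.distrib)
qed

lemma inI_smult:
  assumes "inI ls R u"
  shows "inI ls R (\<lambda>q. k * u q)"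
proof -
  obtain c where "u = (\<lambda>q. \<Sum>t \<in> paths ls \<times> R \<times> paths ls. c t * gen_term ls t q)"
    using assms unfolding inI_gen_term by blast
  then show ?thesis
    unfolding inI_gen_term
    by (intro exI[where x="\<lambda>t. k * c t"]) (simp add: sum_distrib_left mult.assoc)
qed

lemma inI_sum:
  assumes "finite S" "\<And>j. j \<in> S \<Longrightarrow> inI ls R (u j)"
  shows "inI ls R (\<lambda>q. \<Sum>j\<in>S. u j q)"
  using assms by (induction S rule: finite_induct) (simp_all add: inI_zero inI_add)

lemma inI_gen:
  assumes "finite R" "r \<in> R" "q1 \<in> paths ls" "q2 \<in> paths ls"
  shows "inI ls R (mul ls (mul ls (delta q1) r) (delta q2))"
proof -
  let ?t = "(q1, r, q2)"
  have fin: "finite (paths ls \<times> R \<times> paths ls)" using assms(1) by (simp add: finite_paths)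
  have mem: "?t \<in> paths ls \<times> R \<times> paths ls" using assms by simp
  have "gen_term ls ?t q = (\<Sum>t \<in> paths ls \<times> R \<times> paths ls. (if t = ?t then 1 else 0) * gen_term ls t q)" for q
    using sum.delta[OF fin, of ?t "\<lambda>t. gen_term ls t q"] mem
    by (simp add: if_distrib[where f="\<lambda>x. x * _"] cong: if_cong)
  then show ?thesis
    unfolding inI_gen_term by (intro exI[where x="\<lambda>t. if t = ?t then 1 else 0"]) (auto simp: gen_term_def)
qed

lemma inI_rel:
  assumes "finite R" "r \<in> R" "in_eAe ls x y r" "x \<in> verts ls" "y \<in> verts ls"
  shows "inI ls R r"
proof -
  have "mul ls (mul ls (delta (Triv x)) r) (delta (Triv y)) = r"
    using assms(3-5) unfolding in_eAe_def by (intro ext) (auto simp: mul_Triv_left mul_Triv_right)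
  then show ?thesis
    using inI_gen[OF assms(1,2) Triv_in_paths[OF assms(4)] Triv_in_paths[OF assms(5)]] by simp
qed

lemma in_eAe_zero: "in_eAe ls x y (\<lambda>p. 0)"
  by (simp add: in_eAe_def)

lemma in_eAe_add: "in_eAe ls x y u \<Longrightarrow> in_eAe ls x y v \<Longrightarrow> in_eAe ls x y (\<lambda>p. u p + v p)"
  unfolding in_eAe_def by (metis add.left_neutral)

lemma in_eAe_diff: "in_eAe ls x y u \<Longrightarrow> in_eAe ls x y v \<Longrightarrow> in_eAe ls x y (\<lambda>p. u p - v p)"
  unfolding in_eAe_def by (metis diff_self)

lemma in_eAe_sum:
  "finite S \<Longrightarrow> (\<And>i. i \<in> S \<Longrightarrow> in_eAe ls x y (u i)) \<Longrightarrow> in_eAe ls x y (\<lambda>p. \<Sum>i\<in>S. u i p)"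
  by (induction S rule: finite_induct) (simp_all add: in_eAe_zero in_eAe_add)

lemma hom1_single:
  "\<gamma> \<in> arrows ls \<Longrightarrow> in_eAe ls (asrc ls \<gamma>) (atgt ls \<gamma>) h \<Longrightarrow> hom1 ls (single \<gamma> h)"
  unfolding hom1_def single_def by (auto simp: in_eAe_zero)

lemma hom1_diff: "hom1 ls f \<Longrightarrow> hom1 ls g \<Longrightarrow> hom1 ls (\<lambda>\<gamma> p. f \<gamma> p - g \<gamma> p)"
  unfolding hom1_def by (auto intro: in_eAe_diff)

lemma hom1_sum: "finite S \<Longrightarrow> (\<And>i. i \<in> S \<Longrightarrow> hom1 ls (f i)) \<Longrightarrow> hom1 ls (\<lambda>\<gamma> p. \<Sum>i\<in>S. f i \<gamma> p)"
  unfolding hom1_def by (auto intro!: in_eAe_sum)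

lemma arrows_iff: "(i, h) \<in> arrows ls \<longleftrightarrow> i < length ls \<and> h < ls ! i"
  by (simp add: arrows_def)

lemma D1_delta: "P \<in> paths ls \<Longrightarrow> D1 ls f (delta P) = D1p ls f P"
  unfolding D1_def
  by (auto simp: delta_apply if_distrib[where f="\<lambda>x. x * _"] sum.delta' finite_paths cong: if_cong)

abbreviation br :: "nat list \<Rightarrow> nat \<Rightarrow> path" where
  "br ls i \<equiv> Pth i 0 (ls ! i)"

abbreviation acoef :: "'k::field hom1 \<Rightarrow> nat \<Rightarrow> nat \<Rightarrow> 'k" where
  "acoef f i h \<equiv> f (i, h) (Pth i h (Suc h))"

lemma branch_apply: "branch ls i p = (if p = br ls i then 1 else 0)"
  by (simp add: branch_def delta_def)

lemma in_eAe_arrow: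
  assumes "i < length ls" "h < ls ! i" "2 \<le> ls ! i" "in_eAe ls (vtx ls i h) (vtx ls i (Suc h)) u"
  shows "u = (\<lambda>p. u (Pth i h (Suc h)) * delta (Pth i h (Suc h)) p)"
proof
  fix p
  show "u p = u (Pth i h (Suc h)) * delta (Pth i h (Suc h)) p"
  proof (cases "u p = 0")
    case False
    then have p: "p \<in> paths ls" "psrc ls p = vtx ls i h" "ptgt ls p = vtx ls i (Suc h)"
      using assms(4) unfolding in_eAe_def by auto
    have "p = Pth i h (Suc h)"
    proof (cases p)
      case (Triv x)
      then have "vtx ls i h = vtx ls i (Suc h)" using p by simp
      then show ?thesis using vtx_eq_iff[of i ls h i "Suc h"] assms(1-3) by simp
    next
      case (Pth k j l')
      then have k: "k < length ls" "j < l'" "l' \<le> ls ! k" using p Pth_in_pathsD by auto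
      have "vtx ls k j = vtx ls i h" "vtx ls k l' = vtx ls i (Suc h)" using p Pth by auto
      then have src: "(j = 0 \<and> h = 0) \<or> (j = ls ! k \<and> h = ls ! i) \<or> (k = i \<and> j = h)"
        and tgt: "(l' = ls ! k \<and> Suc h = ls ! i) \<or> (k = i \<and> l' = Suc h)"
        using vtx_eq_iff[of k ls j i h] vtx_eq_iff[of k ls l' i "Suc h"] k assms(1-3) by simp_all
      show ?thesis
        using src tgt k(2,3) assms(3) Pth by (cases "k = i") auto
    qed
    then show ?thesis by (simp add: delta_apply)
  qed (auto simp: delta_apply)
qed

lemma in_eAe_Src_Snk:
  assumes "in_eAe ls Src Snk u"
  shows "u = (\<lambda>p. \<Sum>q<length ls. u (br ls q) * branch ls q p)"
proof
  fix p
  show "u p = (\<Sum>q<length ls. u (br ls q) * branch ls q p)"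
  proof (cases "\<exists>k<length ls. p = br ls k")
    case True
    then obtain k where k: "k < length ls" "p = br ls k" by blast
    have "(\<Sum>q<length ls. u (br ls q) * branch ls q p) = (\<Sum>q<length ls. if q = k then u (br ls q) else 0)"
      by (intro sum.cong) (auto simp: branch_apply k)
    then show ?thesis using k by simp
  next
    case False
    have "u p = 0"
    proof (rule ccontr)
      assume "u p \<noteq> 0"
      then have "p \<in> paths ls" "psrc ls p = Src" "ptgt ls p = Snk"
        using assms unfolding in_eAe_def by auto
      then show False using False
        by (cases p) (auto simp: vtx_def split: if_splits dest!: Pth_in_pathsD)
    qed
    moreover have "(\<Sum>q<length ls. u (br ls q) * branch ls q p) = 0"
      using False by (intro sum.neutral) (auto simp: branch_apply)
    ultimately show ?thesis by simp
  qed
qed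

lemma in_eAe_loop:
  assumes "in_eAe ls x x u"
  shows "u = (\<lambda>p. u (Triv x) * delta (Triv x) p)"
proof
  fix p
  show "u p = u (Triv x) * delta (Triv x) p"
  proof (cases "u p = 0")
    case False
    then have p: "p \<in> paths ls" "psrc ls p = x" "ptgt ls p = x"
      using assms unfolding in_eAe_def by auto
    have "p = Triv x"
    proof (cases p)
      case (Pth k j l')
      then have "j < l'" "l' \<le> ls ! k" "vtx ls k j = vtx ls k l'"
        using p Pth_in_pathsD by auto
      then show ?thesis by (auto simp: vtx_def split: if_splits)
    qed (use p in simp)
    then show ?thesis by (simp add: delta_apply)
  qed (auto simp: delta_apply)
qed

lemma hom0_vertex:
  assumes "hom0 ls g" "x \<in> verts ls"
  shows "g x = (\<lambda>p. g x (Triv x) * delta (Triv x) p)"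
  using assms in_eAe_loop unfolding hom0_def by blast

lemma hom1_long_arrow:
  assumes "hom1 ls f" "i < length ls" "2 \<le> ls ! i" "h < ls ! i"
  shows "f (i, h) = (\<lambda>p. acoef f i h * delta (Pth i h (Suc h)) p)"
proof -
  have "in_eAe ls (vtx ls i h) (vtx ls i (Suc h)) (f (i, h))"
    using assms(1,2,4) unfolding hom1_def by (auto simp: arrows_iff)
  then show ?thesis using in_eAe_arrow assms by blast
qed

lemma D0_arrow:
  assumes "hom0 ls g" "i < length ls" "h < ls ! i"
  shows "D0 ls g (i, h) = (\<lambda>p. (g (vtx ls i (Suc h)) (Triv (vtx ls i (Suc h)))
                                 - g (vtx ls i h) (Triv (vtx ls i h))) * delta (Pth i h (Suc h)) p)"
proof
  fix p
  let ?s = "vtx ls i h" and ?t = "vtx ls i (Suc h)" and ?A = "Pth i h (Suc h)"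
  have sv: "?s \<in> verts ls" "?t \<in> verts ls" using assms by (auto intro!: vtx_in_verts)
  have A: "?A \<in> paths ls" using assms by (auto intro!: Pth_in_paths)
  have "mul ls (delta ?A) (g ?t) p = g ?t (Triv ?t) * delta ?A p"
    by (subst hom0_vertex[OF assms(1) sv(2)])
      (simp add: mul_smult_right mul_delta_delta[OF A Triv_in_paths[OF sv(2)]])
  moreover have "mul ls (g ?s) (delta ?A) p = g ?s (Triv ?s) * delta ?A p"
    by (subst hom0_vertex[OF assms(1) sv(1)])
      (simp add: mul_smult_left mul_delta_delta[OF Triv_in_paths[OF sv(1)] A])
  ultimately show "D0 ls g (i, h) p = (g ?t (Triv ?t) - g ?s (Triv ?s)) * delta ?A p"
    using assms by (simp add: D0_def arrows_iff left_diff_distrib)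
qed

lemma D1p_long_branch:
  assumes "hom1 ls f" "i < length ls" "2 \<le> ls ! i" "j < l" "l \<le> ls ! i"
  shows "D1p ls f (Pth i j l) = (\<lambda>q. (\<Sum>h\<in>{j..<l}. acoef f i h) * delta (Pth i j l) q)"
proof
  fix q
  have summand: "mul ls (mul ls (delta (sp ls i j h)) (f (i, h))) (delta (sp ls i (Suc h) l)) q
        = acoef f i h * delta (Pth i j l) q" if h: "h \<in> {j..<l}" for h
  proof -
    have sp1: "sp ls i j h \<in> paths ls" and sp2: "sp ls i (Suc h) l \<in> paths ls"
      using h assms by (auto intro!: sp_in_paths)
    have A: "Pth i h (Suc h) \<in> paths ls" and B: "Pth i j (Suc h) \<in> paths ls"
      using assms h by (auto intro!: Pth_in_paths)
    have "mul ls (delta (sp ls i j h)) (f (i, h)) = (\<lambda>p. acoef f i h * delta (Pth i j (Suc h)) p)"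
    proof
      fix p
      have "pcat ls (sp ls i j h) (Pth i h (Suc h)) = Some (Pth i j (Suc h))"
        by (auto simp: sp_def)
      then show "mul ls (delta (sp ls i j h)) (f (i, h)) p = acoef f i h * delta (Pth i j (Suc h)) p"
        using h assms
        by (subst hom1_long_arrow[OF assms(1-3)]) (simp_all add: mul_smult_right mul_delta_delta[OF sp1 A])
    qed
    moreover have "pcat ls (Pth i j (Suc h)) (sp ls i (Suc h) l) = Some (Pth i j l)"
      by (auto simp: sp_def)
    ultimately show ?thesis
      by (simp add: mul_smult_left mul_delta_delta[OF B sp2])
  qed
  show "D1p ls f (Pth i j l) q = (\<Sum>h\<in>{j..<l}. acoef f i h) * delta (Pth i j l) q"
    by (simp add: summand sum_distrib_right)
qed

section \<open>Consequences of the presentation\<close>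

locale toupie =
  fixes ls :: "nat list" and Mon :: "(nat \<times> nat \<times> nat) set" and nr :: nat
    and b :: "nat \<Rightarrow> nat \<Rightarrow> 'k::field_char_0" and kp :: "nat \<Rightarrow> nat"
    and a nl nm nn :: nat
  assumes pres: "toupie_pres ls Mon nr b kp a nl nm nn"
begin

abbreviation len :: nat where "len \<equiv> length ls"
abbreviation R :: "'k kq set" where "R \<equiv> rels ls Mon nr b"

lemmas presentation = pres[unfolded toupie_pres_def]

lemma blocks_length: "a + nl + nm + nn = len"
  using presentation by (elim conjE) blast

lemma len_pos: "0 < len"
  using presentation by (elim conjE) blast

lemma direct_branch_length: "i < a \<Longrightarrow> ls ! i = 1"
  using presentation by (elim conjE) blast

lemma long_branch_length: "a \<le> i \<Longrightarrow> i < len \<Longrightarrow> 2 \<le> ls ! i"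
  using presentation by (elim conjE) blast

lemma mon_bounds: "(i, j, l) \<in> Mon \<Longrightarrow> a + nl \<le> i \<and> i < a + nl + nm \<and> j + 2 \<le> l \<and> l \<le> ls ! i"
  using presentation by (elim conjE) blast

lemma b_vanishes: "s < nr \<Longrightarrow> i < a + nl + nm \<or> len \<le> i \<Longrightarrow> b s i = 0"
  using presentation by (elim conjE) blast

lemma rho_nontrivial: "s < nr \<Longrightarrow> \<exists>i. i \<noteq> kp s \<and> b s i \<noteq> 0"
  using presentation by (elim conjE) blast

lemma b_pivot: "s < nr \<Longrightarrow> b s (kp s) = 1"
  using presentation by (elim conjE) blast

lemma b_pivot_column: "s < nr \<Longrightarrow> s' < nr \<Longrightarrow> s' \<noteq> s \<Longrightarrow> b s' (kp s) = 0"
  using presentation by (elim conjE) blast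

lemma branch_length_pos: "i < len \<Longrightarrow> 0 < ls ! i"
  using direct_branch_length[of i] long_branch_length[of i] by (cases "i < a") auto

lemma has_mon_block: "has_mon Mon i \<Longrightarrow> a + nl \<le> i \<and> i < a + nl + nm"
  unfolding has_mon_def using mon_bounds by blast

lemma has_mon_long: "has_mon Mon i \<Longrightarrow> i < len \<and> 2 \<le> ls ! i \<and> a \<le> i"
  using has_mon_block blocks_length long_branch_length by fastforce

lemma b_nonzero_branch:
  assumes "s < nr" "b s i \<noteq> 0"
  shows "\<not> has_mon Mon i \<and> 2 \<le> ls ! i \<and> a \<le> i \<and> i < len"
proof -
  have "a + nl + nm \<le> i" "i < len" using b_vanishes[OF assms(1), of i] assms(2) by (meson not_le)+
  then show ?thesis using has_mon_block long_branch_length by fastforce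
qed

lemma pivot_branch: "s < nr \<Longrightarrow> kp s < len \<and> \<not> has_mon Mon (kp s)"
  using b_nonzero_branch[of s "kp s"] b_pivot[of s] by simp

lemma sum_pivot_column: "t < nr \<Longrightarrow> (\<Sum>t'<nr. lam t' * b t' (kp t)) = lam t"
proof -
  assume t: "t < nr"
  have "(\<Sum>t'<nr. lam t' * b t' (kp t)) = (\<Sum>t'<nr. if t' = t then lam t' else 0)"
    using b_pivot b_pivot_column t by (intro sum.cong) auto
  then show ?thesis using t by simp
qed

lemma br_in_paths: "i < len \<Longrightarrow> br ls i \<in> paths ls"
  using branch_length_pos by (intro Pth_in_paths) auto

lemma psrc_br: "psrc ls (br ls i) = Src"
  by (simp add: vtx_def)

lemma ptgt_br: "i < len \<Longrightarrow> ptgt ls (br ls i) = Snk"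
  using branch_length_pos by (auto simp: vtx_def)

lemma branch_br: "k < len \<Longrightarrow> i < len \<Longrightarrow> branch ls k (br ls i) = (if k = i then 1 else 0)"
  by (auto simp: branch_apply)

lemma rho_apply: "rho ls b s p = (\<Sum>i<len. b s i * branch ls i p)"
  by (simp add: rho_def)

lemma rho_branch_coeff: "s < nr \<Longrightarrow> rho ls b s (br ls k) = b s k"
proof -
  assume s: "s < nr"
  have "rho ls b s (br ls k) = (\<Sum>i<len. if i = k then b s i else 0)"
    unfolding rho_apply branch_apply by (intro sum.cong) auto
  then show ?thesis using b_vanishes[OF s] by (auto simp: sum.delta')
qed

lemma rho_support: "rho ls b s p \<noteq> 0 \<Longrightarrow> \<exists>k<len. p = br ls k \<and> b s k \<noteq> 0"
proof (rule ccontr)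
  assume h: "rho ls b s p \<noteq> 0" "\<not> (\<exists>k<len. p = br ls k \<and> b s k \<noteq> 0)"
  then have "rho ls b s p = 0" unfolding rho_apply branch_apply by (intro sum.neutral) auto
  with h show False by simp
qed

lemma rho_inj:
  assumes "s < nr" "s' < nr" "rho ls b s = rho ls b s'"
  shows "s = s'"
proof (rule ccontr)
  assume "s \<noteq> s'"
  then have "rho ls b s' (br ls (kp s)) = 0"
    using rho_branch_coeff[OF assms(2)] b_pivot_column[OF assms(1,2)] by simp
  moreover have "rho ls b s (br ls (kp s)) = 1"
    using rho_branch_coeff[OF assms(1)] b_pivot[OF assms(1)] by simp
  ultimately show False using assms(3) by simp
qed

lemma rho_not_delta: "s < nr \<Longrightarrow> rho ls b s \<noteq> delta P"
proof
  assume h: "s < nr" "rho ls b s = delta P"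
  obtain i where i: "i \<noteq> kp s" "b s i \<noteq> 0" using rho_nontrivial h by blast
  have "rho ls b s (br ls (kp s)) \<noteq> 0" "rho ls b s (br ls i) \<noteq> 0"
    using rho_branch_coeff[OF h(1)] b_pivot[OF h(1)] i by simp_all
  then have "P = br ls (kp s)" "P = br ls i" using h(2) by (auto simp: delta_apply split: if_splits)
  then show False using i by simp
qed

lemma rho_eAe: "s < nr \<Longrightarrow> in_eAe ls Src Snk (rho ls b s)"
  unfolding in_eAe_def using rho_support br_in_paths psrc_br ptgt_br by blast

lemma finite_Mon: "finite Mon"
proof -
  have "Mon \<subseteq> {..<len} \<times> {..sum_list ls} \<times> {..sum_list ls}"
  proof
    fix x assume "x \<in> Mon"
    then obtain i j l where x: "x = (i, j, l)" "(i, j, l) \<in> Mon" by (cases x) auto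
    then have "i < len" "j + 2 \<le> l" "l \<le> ls ! i" using mon_bounds blocks_length by fastforce+
    moreover have "ls ! i \<le> sum_list ls" using \<open>i < len\<close> by (simp add: elem_le_sum_list)
    ultimately show "x \<in> {..<len} \<times> {..sum_list ls} \<times> {..sum_list ls}" using x by auto
  qed
  then show ?thesis by (rule finite_subset) auto
qed

lemma finite_rels: "finite R"
  unfolding rels_def using finite_Mon by simp

lemma rels_cases:
  assumes "r \<in> R"
  obtains (mon) i j l where "(i, j, l) \<in> Mon" "r = delta (Pth i j l)"
    | (rho) s where "s < nr" "r = rho ls b s"
  using assms unfolding rels_def by auto

lemma inI_rho: "s < nr \<Longrightarrow> inI ls R (rho ls b s)"
  by (rule inI_rel[OF finite_rels _ rho_eAe Src_verts Snk_verts]) (auto simp: rels_def)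

lemma inI_mon:
  assumes "(i, j, l) \<in> Mon"
  shows "inI ls R (delta (Pth i j l))"
proof (rule inI_rel[OF finite_rels])
  show "delta (Pth i j l) \<in> R"
    unfolding rels_def using assms by (auto intro!: rev_image_eqI[where x="(i, j, l)"])
  show "in_eAe ls (vtx ls i j) (vtx ls i l) (delta (Pth i j l))"
    using mon_bounds[OF assms] blocks_length by (auto simp: in_eAe_def delta_def intro: Pth_in_paths)
  show "vtx ls i j \<in> verts ls" "vtx ls i l \<in> verts ls"
    using mon_bounds[OF assms] blocks_length by (auto intro!: vtx_in_verts)
qed

lemma inI_branch_mon:
  assumes "has_mon Mon q"
  shows "inI ls R (branch ls q)"
proof -
  obtain j l where m: "(q, j, l) \<in> Mon" using assms unfolding has_mon_def by blast
  note bounds = mon_bounds[OF m]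
  have q: "q < len" using has_mon_long[OF assms] by simp
  have sp1: "sp ls q 0 j \<in> paths ls" and sp2: "sp ls q l (ls ! q) \<in> paths ls"
    using bounds q by (auto intro!: sp_in_paths)
  have P: "Pth q j l \<in> paths ls" and P2: "Pth q 0 l \<in> paths ls"
    using bounds q by (auto intro!: Pth_in_paths)
  have c1: "pcat ls (sp ls q 0 j) (Pth q j l) = Some (Pth q 0 l)"
    by (auto simp: sp_def vtx_def)
  have c2: "pcat ls (Pth q 0 l) (sp ls q l (ls ! q)) = Some (Pth q 0 (ls ! q))"
    by (auto simp: sp_def)
  have "delta (Pth q j l) \<in> R"
    unfolding rels_def using m by (auto intro!: rev_image_eqI[where x="(q, j, l)"])
  moreover have "mul ls (mul ls (delta (sp ls q 0 j)) (delta (Pth q j l))) (delta (sp ls q l (ls ! q)))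
      = (branch ls q :: 'k kq)"
    by (simp add: mul_delta_delta[OF sp1 P c1] mul_delta_delta[OF P2 sp2 c2] branch_def)
  ultimately show ?thesis using inI_gen[OF finite_rels _ sp1 sp2] by metis
qed

text \<open>An element of I vanishes on the arrows, since every relation is supported on paths of length at
  least 2; and its coefficients on the branches free of monomial relations lie in the row space of b,
  since only the terms e_0 rho_s e_omega of the generating sums reach those branches.\<close>

lemma rels_support_length: "r \<in> R \<Longrightarrow> r y \<noteq> 0 \<Longrightarrow> 2 \<le> plen y"
proof (induction rule: rels_cases)
  case (mon i j l)
  then show ?case using mon_bounds[of i j l] by (auto simp: delta_apply split: if_splits)
next
  case (rho s)
  then obtain k where "k < len" "y = br ls k" "b s k \<noteq> 0" using rho_support by blast
  then show ?case using b_nonzero_branch[OF rho(1)] by auto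
qed

lemma gen_term_support_length:
  assumes "t \<in> paths ls \<times> R \<times> paths ls" "gen_term ls t p \<noteq> 0"
  shows "2 \<le> plen p"
proof -
  obtain q1 r q2 where t: "t = (q1, r, q2)" by (cases t) auto
  have "mul ls (mul ls (delta q1) r) (delta q2) p \<noteq> 0" using assms(2) by (simp add: gen_term_def t)
  then obtain x y where xy: "x \<in> paths ls" "y \<in> paths ls" "pcat ls x y = Some p"
      "mul ls (delta q1) r x \<noteq> 0"
    by (rule mul_support)
  obtain x' y' where xy': "x' \<in> paths ls" "y' \<in> paths ls" "pcat ls x' y' = Some x" "r y' \<noteq> 0"
    using xy(4) by (rule mul_support)
  have "2 \<le> plen y'" using rels_support_length xy'(4) assms(1) t by auto
  then show ?thesis using plen_pcat[OF xy(1-3)] plen_pcat[OF xy'(1-3)] by simp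
qed

lemma gen_term_mon_support:
  assumes "gen_term ls (q1, delta (Pth i j l) :: 'k kq, q2) p \<noteq> 0"
  shows "\<exists>j0 l0. p = Pth i j0 l0"
proof -
  have "mul ls (mul ls (delta q1) (delta (Pth i j l) :: 'k kq)) (delta q2) p \<noteq> 0"
    using assms by (simp add: gen_term_def)
  then obtain x y where xy: "y \<in> paths ls" "pcat ls x y = Some p"
      "mul ls (delta q1) (delta (Pth i j l) :: 'k kq) x \<noteq> 0"
    by (rule mul_support)
  obtain x' y' where "x' \<in> paths ls" "pcat ls x' y' = Some x" "(delta (Pth i j l) :: 'k kq) y' \<noteq> 0"
    using xy(3) by (rule mul_support)
  then have "x' \<in> paths ls" "pcat ls x' (Pth i j l) = Some x"
    by (simp_all add: delta_apply split: if_splits)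
  then obtain j1 where "x = Pth i j1 l" using pcat_right_Pth by blast
  then show ?thesis using pcat_left_Pth[OF xy(1)] xy(2) by blast
qed

lemma mul_left_branches:
  assumes "q \<in> paths ls" "\<And>p. v p \<noteq> 0 \<Longrightarrow> \<exists>k<len. p = br ls k"
  shows "mul ls (delta q) v p = (if q = Triv Src then v p else 0)"
proof (cases "q = Triv Src")
  case True
  have "v p \<noteq> 0 \<Longrightarrow> p \<in> paths ls \<and> psrc ls p = Src" using assms(2) br_in_paths psrc_br by blast
  then show ?thesis using True by (auto simp: mul_Triv_left Src_verts)
next
  case False
  have "pcat ls q (br ls k) \<noteq> Some p" for k
    using assms(1) False by (cases q) (auto simp: vtx_def split: if_splits dest!: Pth_in_pathsD)
  then have "(\<Sum>y\<in>{y\<in>paths ls. pcat ls q y = Some p}. v y) = 0"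
    using assms(2) by (intro sum.neutral ballI) (metis (mono_tags) mem_Collect_eq)
  then show ?thesis using False by (simp add: mul_delta_left)
qed

lemma mul_right_branches:
  assumes "q \<in> paths ls" "\<And>p. v p \<noteq> 0 \<Longrightarrow> \<exists>k<len. p = br ls k"
  shows "mul ls v (delta q) p = (if q = Triv Snk then v p else 0)"
proof (cases "q = Triv Snk")
  case True
  have "v p \<noteq> 0 \<Longrightarrow> p \<in> paths ls \<and> ptgt ls p = Snk" using assms(2) br_in_paths ptgt_br by blast
  then show ?thesis using True by (auto simp: mul_Triv_right Snk_verts)
next
  case False
  have "pcat ls (br ls k) q \<noteq> Some p" if "k < len" for k
    using assms(1) False branch_length_pos[OF that]
    by (cases q) (auto simp: vtx_def split: if_splits dest!: Pth_in_pathsD)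
  then have "(\<Sum>y\<in>{y\<in>paths ls. pcat ls y q = Some p}. v y) = 0"
    using assms(2) by (intro sum.neutral ballI) (metis (mono_tags) mem_Collect_eq)
  then show ?thesis using False by (simp add: mul_delta_right)
qed

lemma gen_term_rho:
  assumes "q1 \<in> paths ls" "q2 \<in> paths ls" "s < nr"
  shows "gen_term ls (q1, rho ls b s, q2) p = (if q1 = Triv Src \<and> q2 = Triv Snk then rho ls b s p else 0)"
proof -
  have supp: "\<And>p. rho ls b s p \<noteq> 0 \<Longrightarrow> \<exists>k<len. p = br ls k" using rho_support by blast
  have left: "mul ls (delta q1) (rho ls b s) = (\<lambda>p. if q1 = Triv Src then rho ls b s p else 0)"
    using mul_left_branches[OF assms(1) supp] by auto
  have "\<And>p. (if q1 = Triv Src then rho ls b s p else 0) \<noteq> 0 \<Longrightarrow> \<exists>k<len. p = br ls k"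
    using supp by (auto split: if_splits)
  then show ?thesis unfolding gen_term_def by (simp add: left mul_right_branches[OF assms(2)])
qed

lemma gen_term_branch:
  assumes "t \<in> paths ls \<times> R \<times> paths ls" "i < len" "\<not> has_mon Mon i"
  shows "gen_term ls t (br ls i) = (\<Sum>s<nr. if t = (Triv Src, rho ls b s, Triv Snk) then b s i else 0)"
proof -
  obtain q1 r q2 where t: "t = (q1, r, q2)" "q1 \<in> paths ls" "r \<in> R" "q2 \<in> paths ls"
    using assms(1) by (cases t) auto
  show ?thesis using t(3)
  proof (cases rule: rels_cases)
    case (mon i' j l)
    have "gen_term ls t (br ls i) = 0"
    proof (rule ccontr)
      assume "gen_term ls t (br ls i) \<noteq> 0"
      then obtain j0 l0 where "br ls i = Pth i' j0 l0" using gen_term_mon_support t mon by blast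
      then have "i = i'" by simp
      then show False using assms(3) mon(1) unfolding has_mon_def by blast
    qed
    moreover have "t \<noteq> (Triv Src, rho ls b s, Triv Snk)" if "s < nr" for s
      using rho_not_delta[OF that, of "Pth i' j l"] mon(2) t(1) by auto
    ultimately show ?thesis by simp
  next
    case (rho s0)
    have "(\<Sum>s<nr. if t = (Triv Src, rho ls b s, Triv Snk) then b s i else 0)
        = (\<Sum>s<nr. if s = s0 then (if q1 = Triv Src \<and> q2 = Triv Snk then b s i else 0) else 0)"
      using rho_inj rho(1) by (intro sum.cong) (auto simp: t(1) rho(2))
    also have "\<dots> = (if q1 = Triv Src \<and> q2 = Triv Snk then b s0 i else 0)"
      using rho(1) by simp
    also have "\<dots> = gen_term ls t (br ls i)"
      using gen_term_rho[OF t(2,4) rho(1)] rho_branch_coeff[OF rho(1)] t(1) rho(2) by simp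
    finally show ?thesis by simp
  qed
qed

lemma ideal_arrow_coeff:
  assumes "inI ls R u"
  shows "u (Pth i j (Suc j)) = 0"
proof -
  obtain c where c: "u = (\<lambda>q. \<Sum>t \<in> paths ls \<times> R \<times> paths ls. c t * gen_term ls t q)"
    using assms inI_gen_term by blast
  have "gen_term ls t (Pth i j (Suc j)) = 0" if "t \<in> paths ls \<times> R \<times> paths ls" for t
    using gen_term_support_length[OF that, of "Pth i j (Suc j)"] by fastforce
  then show ?thesis unfolding c by simp
qed

lemma ideal_branch_coeffs:
  assumes "inI ls R u"
  obtains lam where "\<And>i. i < len \<Longrightarrow> \<not> has_mon Mon i \<Longrightarrow> u (br ls i) = (\<Sum>s<nr. lam s * b s i)"
proof -
  obtain c where c: "u = (\<lambda>q. \<Sum>t \<in> paths ls \<times> R \<times> paths ls. c t * gen_term ls t q)"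
    using assms inI_gen_term by blast
  let ?T = "paths ls \<times> R \<times> paths ls" and ?t = "\<lambda>s. (Triv Src, rho ls b s, Triv Snk)"
  have fin: "finite ?T" using finite_rels finite_paths by simp
  have coeffs: "u (br ls i) = (\<Sum>s<nr. c (?t s) * b s i)" if "i < len" "\<not> has_mon Mon i" for i
  proof -
    have "u (br ls i) = (\<Sum>t\<in>?T. \<Sum>s<nr. if t = ?t s then c t * b s i else 0)"
      unfolding c using gen_term_branch[OF _ that]
      by (simp add: sum_distrib_left if_distrib[where f="\<lambda>x. c _ * x"] cong: if_cong)
    also have "\<dots> = (\<Sum>s<nr. \<Sum>t\<in>?T. if t = ?t s then c t * b s i else 0)"
      by (rule sum.swap)
    also have "\<dots> = (\<Sum>s<nr. c (?t s) * b s i)"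
    proof (intro sum.cong refl)
      fix s assume "s \<in> {..<nr}"
      then have "?t s \<in> ?T" by (auto simp: rels_def Triv_in_paths Src_verts Snk_verts)
      then show "(\<Sum>t\<in>?T. if t = ?t s then c t * b s i else 0) = c (?t s) * b s i"
        using sum.delta'[OF fin, of "?t s" "\<lambda>t. c t * b s i"]
        by (simp add: eq_commute[of _ "?t s"])
    qed
    finally show ?thesis .
  qed
  show ?thesis by (rule that[of "\<lambda>s. c (?t s)"]) (simp add: coeffs)
qed

lemma hom1_direct_arrow:
  assumes "hom1 ls f" "p < a"
  shows "f (p, 0) = (\<lambda>x. \<Sum>q<len. f (p, 0) (br ls q) * branch ls q x)"
proof -
  have p: "p < len" using assms blocks_length by simp
  have "in_eAe ls (vtx ls p 0) (vtx ls p 1) (f (p, 0))"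
    using assms(1) p branch_length_pos[OF p] unfolding hom1_def by (auto simp: arrows_iff)
  moreover have "vtx ls p 0 = Src" "vtx ls p 1 = Snk"
    using direct_branch_length[OF assms(2)] by (auto simp: vtx_def)
  ultimately show ?thesis using in_eAe_Src_Snk by simp
qed

abbreviation bsum :: "'k hom1 \<Rightarrow> nat \<Rightarrow> 'k" where
  "bsum f k \<equiv> \<Sum>h<ls ! k. acoef f k h"

lemma D1_rho:
  assumes "hom1 ls f" "s < nr"
  shows "D1 ls f (rho ls b s) = (\<lambda>q. \<Sum>k<len. b s k * bsum f k * branch ls k q)"
proof
  fix q
  have "D1 ls f (rho ls b s) q = (\<Sum>p\<in>paths ls. \<Sum>k<len. b s k * (branch ls k p * D1p ls f p q))"
    unfolding D1_def rho_apply by (simp add: sum_distrib_right mult.assoc)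
  also have "\<dots> = (\<Sum>k<len. b s k * (\<Sum>p\<in>paths ls. branch ls k p * D1p ls f p q))"
    by (simp add: sum.swap[where B="{..<len}"] sum_distrib_left)
  also have "\<dots> = (\<Sum>k<len. b s k * bsum f k * branch ls k q)"
  proof (intro sum.cong refl)
    fix k assume k: "k \<in> {..<len}"
    then have "(\<Sum>p\<in>paths ls. branch ls k p * D1p ls f p q) = D1p ls f (br ls k) q"
      using br_in_paths
      by (simp add: branch_apply if_distrib[where f="\<lambda>x. x * _"] sum.delta' finite_paths cong: if_cong)
    moreover have "D1p ls f (br ls k) q = bsum f k * branch ls k q" if "b s k \<noteq> 0"
    proof -
      have "2 \<le> ls ! k" "k < len" using b_nonzero_branch[OF assms(2) that] by auto
      then show ?thesis
        using D1p_long_branch[OF assms(1), of k 0 "ls ! k"] by (simp add: atLeast0LessThan branch_def)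
    qed
    ultimately show "b s k * (\<Sum>p\<in>paths ls. branch ls k p * D1p ls f p q) = b s k * bsum f k * branch ls k q"
      by (cases "b s k = 0") auto
  qed
  finally show "D1 ls f (rho ls b s) q = (\<Sum>k<len. b s k * bsum f k * branch ls k q)" .
qed

end

section \<open>The basis elements\<close>

lemma sum_pick:
  assumes "finite S" "j0 \<in> S" "\<And>j. j \<in> S \<Longrightarrow> v j = (if j = j0 then 1 else (0::'k::field))"
  shows "(\<Sum>j\<in>S. c j * v j) = c j0"
proof -
  have "(\<Sum>j\<in>S. c j * v j) = (\<Sum>j\<in>S. if j = j0 then c j else 0)"
    using assms(3) by (intro sum.cong) auto
  then show ?thesis using assms(1,2) by simp
qed

text \<open>The index j covers the long branch i when alpha^i_0||alpha^i_0 is a summand of elem j.\<close>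

fun covers :: "idx \<Rightarrow> nat \<Rightarrow> bool" where
  "covers (Yi i') i = (i' = i)"
| "covers (Ti K) i = (i \<in> K)"
| "covers _ i = False"

text \<open>The coefficient of the branch q in the value of elem j on the arrow alpha^(u) from 0 to omega
  (for the indices Wi, Zi and Xi, which only act on such arrows).\<close>

fun direct_coeff :: "idx \<Rightarrow> nat \<Rightarrow> nat \<Rightarrow> 'k::field" where
  "direct_coeff (Wi p q') u q = (if p = u \<and> q' = q then 1 else 0)"
| "direct_coeff (Zi p s) u q = (if p = u \<and> s = q then 1 else 0)"
| "direct_coeff (Xi j) u q = (if j = u \<and> q = u then 1 else 0) - (if u = 0 \<and> q = 0 then 1 else 0)"
| "direct_coeff _ u q = 0"

context toupie
begin

abbreviation V :: "nat set" where "V \<equiv> Vrho ls Mon"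
abbreviation E :: "(nat \<times> nat) set" where "E \<equiv> Erho ls Mon nr b"
abbreviation Comps :: "nat set set" where "Comps \<equiv> comps ls Mon nr b"

definition branch_idx :: "nat \<Rightarrow> idx" where
  "branch_idx i = (if has_mon Mon i then Yi i else Ti (E\<^sup>* `` {i}))"

definition valid_idx :: "idx \<Rightarrow> bool" where
  "valid_idx j = (case j of
      Yi i \<Rightarrow> i < len \<and> has_mon Mon i
    | Wi p q \<Rightarrow> p < a \<and> q < a \<and> p \<noteq> q
    | Zi u s \<Rightarrow> u < a \<and> a \<le> s \<and> s < len
    | Xi j \<Rightarrow> 1 \<le> j \<and> j < a
    | Ti K \<Rightarrow> K \<in> Comps)"

lemma Vrho_iff: "i \<in> V \<longleftrightarrow> i < len \<and> 2 \<le> ls ! i \<and> \<not> has_mon Mon i"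
  by (simp add: Vrho_def)

lemma Vrho_iff_long: "a \<le> i \<Longrightarrow> i < len \<Longrightarrow> i \<in> V \<longleftrightarrow> \<not> has_mon Mon i"
  using long_branch_length by (simp add: Vrho_iff)

lemma Vrho_long: "i \<in> V \<Longrightarrow> a \<le> i"
  using Vrho_iff direct_branch_length by (metis not_le numeral_le_one_iff semiring_norm(69))

lemma finite_V: "finite V"
  unfolding Vrho_def by simp

lemma E_sub: "E \<subseteq> V \<times> V"
  unfolding Erho_def by auto

lemma E_sym: "sym E"
  unfolding Erho_def sym_def by blast

lemma component_subset: "i \<in> V \<Longrightarrow> E\<^sup>* `` {i} \<subseteq> V"
proof
  fix k assume i: "i \<in> V" and "k \<in> E\<^sup>* `` {i}"
  then have "(i, k) \<in> E\<^sup>*" by simp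
  then show "k \<in> V" using i E_sub by (induction rule: rtrancl_induct) auto
qed

lemma component_eq: "k \<in> E\<^sup>* `` {i} \<Longrightarrow> E\<^sup>* `` {k} = E\<^sup>* `` {i}"
proof -
  assume "k \<in> E\<^sup>* `` {i}"
  then have ik: "(i, k) \<in> E\<^sup>*" and ki: "(k, i) \<in> E\<^sup>*"
    using sym_rtrancl[OF E_sym] unfolding sym_def by auto
  show ?thesis
  proof
    show "E\<^sup>* `` {k} \<subseteq> E\<^sup>* `` {i}" using ik by (auto intro: rtrancl_trans)
    show "E\<^sup>* `` {i} \<subseteq> E\<^sup>* `` {k}" using ki by (auto intro: rtrancl_trans)
  qed
qed

lemma Comps_iff: "K \<in> Comps \<longleftrightarrow> (\<exists>i\<in>V. K = E\<^sup>* `` {i})"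
  unfolding comps_def by auto

lemma finite_Comps: "finite Comps"
proof -
  have "Comps \<subseteq> Pow V"
  proof
    fix K assume "K \<in> Comps"
    then obtain i where "i \<in> V" "K = E\<^sup>* `` {i}" by (auto simp: Comps_iff)
    then show "K \<in> Pow V" using component_subset by auto
  qed
  then show ?thesis using finite_V by (meson finite_Pow_iff finite_subset)
qed

lemma Comps_subset: "K \<in> Comps \<Longrightarrow> K \<subseteq> V"
  using component_subset Comps_iff by blast

lemma finite_component: "K \<in> Comps \<Longrightarrow> finite K"
  using Comps_subset finite_V finite_subset by blast

lemma branch_idx_valid: "a \<le> i \<Longrightarrow> i < len \<Longrightarrow> valid_idx (branch_idx i) \<and> covers (branch_idx i) i"
  using Vrho_iff_long[of i] by (auto simp: branch_idx_def valid_idx_def Comps_iff)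

lemma covers_iff:
  assumes "valid_idx j" "a \<le> i" "i < len"
  shows "covers j i \<longleftrightarrow> j = branch_idx i"
proof (cases j)
  case (Yi i')
  then show ?thesis using assms by (auto simp: valid_idx_def branch_idx_def)
next
  case (Ti K)
  then obtain i0 where i0: "i0 \<in> V" "K = E\<^sup>* `` {i0}" using assms(1) by (auto simp: valid_idx_def Comps_iff)
  show ?thesis
  proof
    assume "covers j i"
    then have iK: "i \<in> K" using Ti by simp
    then have "i \<in> V" using component_subset i0 by blast
    then have "\<not> has_mon Mon i" by (simp add: Vrho_iff)
    moreover have "E\<^sup>* `` {i} = K" using component_eq iK i0 by simp
    ultimately show "j = branch_idx i" using Ti by (simp add: branch_idx_def)
  next
    assume "j = branch_idx i"
    then have "\<not> has_mon Mon i" "K = E\<^sup>* `` {i}" using Ti by (auto simp: branch_idx_def split: if_splits)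
    then show "covers j i" using Ti by simp
  qed
qed (auto simp: branch_idx_def)

lemma elem_long_arrow:
  assumes "valid_idx j" "a \<le> i"
  shows "elem ls j (i, h) p = (if h = 0 \<and> p = Pth i 0 1 \<and> covers j i then 1 else 0)"
proof (cases j)
  case (Ti K)
  then have K: "finite K" "K \<subseteq> V" using assms finite_component Comps_subset by (auto simp: valid_idx_def)
  have "elem ls j (i, h) p = (\<Sum>i'\<in>K. single (i', 0) (delta (arrp (i', 0))) (i, h) p)"
    by (simp add: Ti)
  also have "\<dots> = (\<Sum>i'\<in>K. if i' = i then (if h = 0 then delta (Pth i 0 1) p else 0) else 0)"
    by (intro sum.cong) (auto simp: single_def)
  also have "\<dots> = (if i \<in> K then (if h = 0 then delta (Pth i 0 1) p else 0) else 0)"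
    using K(1) by (simp add: sum.delta')
  finally show ?thesis using Ti by (auto simp: delta_apply)
qed (use assms in \<open>auto simp: valid_idx_def single_def delta_apply\<close>)

lemma elem_direct_branch:
  assumes "valid_idx j" "u < a" "q < len"
  shows "elem ls j (u, 0) (br ls q) = direct_coeff j u q"
proof (cases j)
  case (Yi i)
  then have "a \<le> i" using assms has_mon_long[of i] by (auto simp: valid_idx_def)
  then show ?thesis using assms Yi by (auto simp: single_def)
next
  case (Ti K)
  then have "K \<subseteq> V" using assms Comps_subset by (auto simp: valid_idx_def)
  then have "\<forall>i\<in>K. a \<le> i" using Vrho_long by blast
  then show ?thesis using Ti assms by (auto simp: single_def intro!: sum.neutral)
qed (use assms in \<open>auto simp: valid_idx_def single_def branch_apply\<close>)

lemma elem_direct_nonbranch: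
  assumes "valid_idx j" "u < a" "\<forall>q<len. x \<noteq> br ls q"
  shows "elem ls j (u, 0) x = 0"
proof (cases j)
  case (Yi i)
  then have "a \<le> i" using assms has_mon_long[of i] by (auto simp: valid_idx_def)
  then show ?thesis using assms Yi by (auto simp: single_def)
next
  case (Ti K)
  then have "K \<subseteq> V" using assms Comps_subset by (auto simp: valid_idx_def)
  then have "\<forall>i\<in>K. a \<le> i" using Vrho_long by blast
  then show ?thesis using Ti assms by (auto simp: single_def intro!: sum.neutral)
next
  case (Wi p q)
  then show ?thesis using assms blocks_length by (auto simp: valid_idx_def single_def branch_apply)
next
  case (Zi p q)
  then show ?thesis using assms blocks_length by (auto simp: valid_idx_def single_def branch_apply)
next
  case (Xi j')
  then have "j' < len" using assms blocks_length by (auto simp: valid_idx_def)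
  then have "x \<noteq> br ls 0" "x \<noteq> br ls j'" using assms(3) len_pos by blast+
  then show ?thesis using Xi by (simp add: single_def branch_apply)
qed


lemma hom1_loop: "i < len \<Longrightarrow> hom1 ls (single (i, 0) (delta (Pth i 0 (Suc 0))))"
  using branch_length_pos[of i]
  by (intro hom1_single) (auto simp: arrows_iff in_eAe_def delta_apply intro: Pth_in_paths)

lemma hom1_direct_branch: "p < a \<Longrightarrow> q < len \<Longrightarrow> hom1 ls (single (p, 0) (branch ls q))"
  using direct_branch_length[of p] blocks_length br_in_paths psrc_br ptgt_br
  by (intro hom1_single) (auto simp: arrows_iff vtx_def in_eAe_def branch_apply)

lemma hom1_elem: "valid_idx j \<Longrightarrow> hom1 ls (elem ls j)"
proof (induction j)
  case (Ti K)
  then have "finite K" "K \<subseteq> V" using finite_component Comps_subset by (auto simp: valid_idx_def)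
  then show ?case by (auto intro!: hom1_sum hom1_loop simp: Vrho_iff)
qed (use blocks_length has_mon_long in \<open>auto simp: valid_idx_def intro!: hom1_loop hom1_direct_branch hom1_diff\<close>)

lemma bsum_elem:
  assumes "valid_idx j" "a \<le> k" "k < len"
  shows "bsum (elem ls j) k = (if covers j k then 1 else 0)"
proof -
  have "bsum (elem ls j) k = (\<Sum>h<ls ! k. if h = 0 then (if covers j k then 1 else 0) else 0)"
    by (intro sum.cong) (auto simp: elem_long_arrow[OF assms(1,2)])
  then show ?thesis using branch_length_pos[OF assms(3)] by simp
qed

text \<open>The branches of a non-monomial relation lie in one component of Q_rho, so an element covers
  either all of them or none.\<close>

lemma covers_relation:
  assumes "valid_idx j" "s < nr" "b s k0 \<noteq> 0" "covers j k0" "b s k \<noteq> 0"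
  shows "covers j k"
proof (cases j)
  case (Yi i)
  then have "has_mon Mon k0" using assms(1,4) by (auto simp: valid_idx_def)
  then show ?thesis using b_nonzero_branch[OF assms(2,3)] by simp
next
  case (Ti K)
  then obtain i0 where i0: "K = E\<^sup>* `` {i0}" using assms(1) by (auto simp: valid_idx_def Comps_iff)
  have "(i0, k0) \<in> E\<^sup>*" using assms(4) Ti i0 by simp
  moreover have "(k0, k) \<in> E"
    unfolding Erho_def using b_nonzero_branch[OF assms(2,3)] b_nonzero_branch[OF assms(2,5)] assms(2,3,5)
    by (auto simp: Vrho_iff)
  ultimately have "(i0, k) \<in> E\<^sup>*" by (rule rtrancl_into_rtrancl)
  then show ?thesis using Ti i0 by simp
qed (use assms in auto)

lemma D1_elem_rho:
  assumes "valid_idx j" "s < nr"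
  shows "D1 ls (elem ls j) (rho ls b s) = (if \<exists>k. b s k \<noteq> 0 \<and> covers j k then rho ls b s else (\<lambda>q. 0))"
proof -
  have "D1 ls (elem ls j) (rho ls b s) = (\<lambda>q. \<Sum>k<len. b s k * (if covers j k then 1 else 0) * branch ls k q)"
    unfolding D1_rho[OF hom1_elem[OF assms(1)] assms(2)]
  proof (intro ext sum.cong refl)
    fix q k
    show "b s k * bsum (elem ls j) k * branch ls k q = b s k * (if covers j k then 1 else 0) * branch ls k q"
      using bsum_elem[OF assms(1), of k] b_nonzero_branch[OF assms(2), of k] by (cases "b s k = 0") auto
  qed
  also have "\<dots> = (if \<exists>k. b s k \<noteq> 0 \<and> covers j k then rho ls b s else (\<lambda>q. 0))"
  proof (cases "\<exists>k. b s k \<noteq> 0 \<and> covers j k")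
    case True
    then have covered: "b s k * (if covers j k then 1 else 0) = b s k" for k
      using covers_relation[OF assms] by fastforce
    show ?thesis using True by (simp add: rho_def covered)
  next
    case False
    then have uncovered: "b s k * (if covers j k then 1 else 0) = 0" for k by auto
    show ?thesis using False by (auto simp: uncovered)
  qed
  finally show ?thesis .
qed

lemma kerD1_elem:
  assumes "valid_idx j"
  shows "kerD1 ls R (elem ls j)"
  unfolding kerD1_def
proof (intro conjI ballI)
  show hom1: "hom1 ls (elem ls j)" using hom1_elem[OF assms] .
  fix r assume "r \<in> R"
  then show "inI ls R (D1 ls (elem ls j) r)"
  proof (cases rule: rels_cases)
    case (mon i j' l)
    note bounds = mon_bounds[OF mon(1)]
    have i: "i < len" "2 \<le> ls ! i" "j' < l" "l \<le> ls ! i"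
      using bounds blocks_length long_branch_length by auto
    have "D1 ls (elem ls j) r = D1p ls (elem ls j) (Pth i j' l)"
      using mon(2) D1_delta[OF Pth_in_paths[OF i(1,3,4)]] by simp
    also have "\<dots> = (\<lambda>q. (\<Sum>h\<in>{j'..<l}. acoef (elem ls j) i h) * delta (Pth i j' l) q)"
      by (rule D1p_long_branch[OF hom1 i])
    finally show ?thesis using inI_smult[OF inI_mon[OF mon(1)]] by simp
  next
    case (rho s)
    then show ?thesis using inI_rho[OF rho(1)] inI_zero[of ls R] by (simp add: D1_elem_rho[OF assms])
  qed
qed

abbreviation Spos :: "idx set" where "Spos \<equiv> idx_pos ls Mon nr b kp a"
abbreviation Szero :: "idx set" where "Szero \<equiv> idx_zero ls Mon nr b"

lemma idx_pos_valid: "j \<in> Spos \<Longrightarrow> valid_idx j"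
  unfolding idx_pos_def valid_idx_def B0w_def by (auto simp: Comps_iff)

lemma idx_zero_valid: "j \<in> Szero \<Longrightarrow> valid_idx j"
  unfolding idx_zero_def valid_idx_def by (auto simp: Comps_iff)

lemma finite_idx_pos: "finite Spos"
proof -
  have W: "{Wi p q | p q. p \<noteq> q \<and> p < a \<and> q < a} \<subseteq> (\<lambda>(p, q). Wi p q) ` ({..<a} \<times> {..<a})"
    by auto
  have Z: "{Zi u s | u s. u < a \<and> s \<in> B0w ls Mon nr kp \<and> a \<le> s} \<subseteq> (\<lambda>(p, q). Zi p q) ` ({..<a} \<times> {..<len})"
    by (auto simp: B0w_def)
  show ?thesis
    unfolding idx_pos_def using finite_subset[OF W] finite_subset[OF Z] finite_Comps by auto
qed

lemma finite_idx_zero: "finite Szero"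
  unfolding idx_zero_def using finite_Comps by auto

lemma Zi_in_Spos: "Zi p s \<in> Spos \<longleftrightarrow> p < a \<and> a \<le> s \<and> s \<in> B0w ls Mon nr kp"
  unfolding idx_pos_def by auto

lemma branch_idx_in_Spos: "a \<le> i \<Longrightarrow> i < len \<Longrightarrow> branch_idx i \<in> Spos"
  using Vrho_iff_long[of i] unfolding idx_pos_def branch_idx_def comps_def by auto

lemma valid_idx_branch_idx:
  assumes "valid_idx j" "(\<exists>i. j = Yi i) \<or> (\<exists>K. j = Ti K)"
  obtains i where "a \<le> i" "i < len" "j = branch_idx i"
proof -
  have "\<exists>i. a \<le> i \<and> i < len \<and> j = branch_idx i"
  proof (cases j)
    case (Yi i')
    then show ?thesis using assms has_mon_long[of i'] by (auto simp: valid_idx_def branch_idx_def)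
  next
    case (Ti K)
    then obtain i0 where i0: "i0 \<in> V" "K = E\<^sup>* `` {i0}" using assms by (auto simp: valid_idx_def Comps_iff)
    then have "a \<le> i0" "i0 < len" "\<not> has_mon Mon i0" using Vrho_long Vrho_iff by auto
    then show ?thesis using Ti i0 by (auto simp: branch_idx_def)
  qed (use assms in auto)
  then show ?thesis using that by blast
qed

text \<open>The sums below are the coefficients of the branch q in the value of lincomb Spos c (elem ls)
  on the arrow alpha^(u).\<close>

lemma direct_sum_offdiag:
  assumes "u < a" "q < a" "q \<noteq> u"
  shows "(\<Sum>j\<in>Spos. c j * direct_coeff j u q) = c (Wi u q)"
proof (rule sum_pick[OF finite_idx_pos])
  show "Wi u q \<in> Spos" using assms unfolding idx_pos_def by auto
  show "direct_coeff j u q = (if j = Wi u q then 1 else 0)" if "j \<in> Spos" for j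
    using idx_pos_valid[OF that] assms by (cases j) (auto simp: valid_idx_def)
qed

lemma direct_sum_diag:
  assumes "0 < u" "u < a"
  shows "(\<Sum>j\<in>Spos. c j * direct_coeff j u u) = c (Xi u)"
proof (rule sum_pick[OF finite_idx_pos])
  show "Xi u \<in> Spos" using assms unfolding idx_pos_def by auto
  show "direct_coeff j u u = (if j = Xi u then 1 else 0)" if "j \<in> Spos" for j
    using idx_pos_valid[OF that] assms by (cases j) (auto simp: valid_idx_def)
qed

lemma direct_sum_diag0: "(\<Sum>j\<in>Spos. c j * direct_coeff j 0 0) = - (\<Sum>u\<in>{1..<a}. c (Xi u))"
proof -
  have "(\<Sum>j\<in>Spos. c j * direct_coeff j 0 0) = (\<Sum>j\<in>Spos. if j \<in> Xi ` {1..<a} then - c j else 0)"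
  proof (intro sum.cong refl)
    fix j assume "j \<in> Spos"
    then show "c j * direct_coeff j 0 0 = (if j \<in> Xi ` {1..<a} then - c j else 0)"
      using idx_pos_valid[of j] by (cases j) (auto simp: valid_idx_def image_iff)
  qed
  also have "\<dots> = (\<Sum>j\<in>Spos \<inter> Xi ` {1..<a}. - c j)"
    using finite_idx_pos by (simp add: sum.inter_restrict)
  also have "Spos \<inter> Xi ` {1..<a} = Xi ` {1..<a}"
    unfolding idx_pos_def by auto
  also have "(\<Sum>j\<in>Xi ` {1..<a}. - c j) = - (\<Sum>u\<in>{1..<a}. c (Xi u))"
    by (simp add: sum.reindex inj_on_def sum_negf)
  finally show ?thesis .
qed

lemma direct_sum_long:
  assumes "u < a" "a \<le> q"
  shows "(\<Sum>j\<in>Spos. c j * direct_coeff j u q) = (if q \<in> B0w ls Mon nr kp then c (Zi u q) else 0)"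
proof -
  have "(\<Sum>j\<in>Spos. c j * direct_coeff j u q) = (\<Sum>j\<in>Spos. if j = Zi u q then c j else 0)"
  proof (intro sum.cong refl)
    fix j assume "j \<in> Spos"
    then show "c j * direct_coeff j u q = (if j = Zi u q then c j else 0)"
      using idx_pos_valid[of j] assms by (cases j) (auto simp: valid_idx_def)
  qed
  then show ?thesis using finite_idx_pos assms by (simp add: sum.delta' Zi_in_Spos)
qed

section \<open>Linear independence modulo coboundaries\<close>

lemma lincomb_long_arrow:
  assumes "finite S" "\<And>j. j \<in> S \<Longrightarrow> valid_idx j" "a \<le> i" "i < len"
  shows "lincomb S c (elem ls) (i, h) p
    = (if h = 0 \<and> p = Pth i 0 1 \<and> branch_idx i \<in> S then c (branch_idx i) else 0)"
proof -
  have "lincomb S c (elem ls) (i, h) p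
      = (\<Sum>j\<in>S. if j = branch_idx i then (if h = 0 \<and> p = Pth i 0 1 then c j else 0) else 0)"
    unfolding lincomb_def using assms by (intro sum.cong refl) (auto simp: elem_long_arrow covers_iff)
  then show ?thesis using assms(1) by (simp add: sum.delta')
qed

lemma lincomb_direct_branch:
  assumes "\<And>j. j \<in> S \<Longrightarrow> valid_idx j" "u < a" "q < len"
  shows "lincomb S c (elem ls) (u, 0) (br ls q) = (\<Sum>j\<in>S. c j * direct_coeff j u q)"
  unfolding lincomb_def using assms by (intro sum.cong refl) (simp add: elem_direct_branch)

lemma vtx_Src: "vtx ls i 0 = Src"
  by (simp add: vtx_def)

lemma vtx_Snk: "i < len \<Longrightarrow> vtx ls i (ls ! i) = Snk"
  using branch_length_pos by (auto simp: vtx_def)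

definition hom0_gap :: "(vert \<Rightarrow> 'k kq) \<Rightarrow> 'k" where
  "hom0_gap g = g Snk (Triv Snk) - g Src (Triv Src)"

text \<open>Along a long branch the coboundary D_0 g telescopes to hom0_gap g, while a combination of
  basis elements only meets the first arrow of the branch.\<close>

lemma coboundary_long_branch:
  assumes g: "hom0 ls g" and cob: "equivA ls R (lincomb S c (elem ls)) (D0 ls g)"
    and S: "finite S" "\<And>j. j \<in> S \<Longrightarrow> valid_idx j" and i: "a \<le> i" "i < len"
  shows "(if branch_idx i \<in> S then c (branch_idx i) else 0) = hom0_gap g"
proof -
  let ?X = "if branch_idx i \<in> S then c (branch_idx i) else 0"
  let ?G = "\<lambda>j. g (vtx ls i j) (Triv (vtx ls i j))"
  have step: "(if h = 0 then ?X else 0) = ?G (Suc h) - ?G h" if h: "h < ls ! i" for h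
  proof -
    have "(i, h) \<in> arrows ls" using h i by (simp add: arrows_iff)
    then have "inI ls R (\<lambda>p. lincomb S c (elem ls) (i, h) p - D0 ls g (i, h) p)"
      using cob unfolding equivA_def by blast
    then have "lincomb S c (elem ls) (i, h) (Pth i h (Suc h)) - D0 ls g (i, h) (Pth i h (Suc h)) = 0"
      by (rule ideal_arrow_coeff)
    then show ?thesis
      using lincomb_long_arrow[OF S i, of c h "Pth i h (Suc h)"] D0_arrow[OF g i(2) h]
      by (auto simp: delta_apply split: if_splits)
  qed
  have "(\<Sum>h<ls ! i. (if h = 0 then ?X else 0)) = (\<Sum>h<ls ! i. ?G (Suc h) - ?G h)"
    using step by (intro sum.cong) auto
  also have "\<dots> = ?G (ls ! i) - ?G 0" by (rule sum_lessThan_telescope)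
  finally show ?thesis
    using branch_length_pos[OF i(2)] vtx_Src vtx_Snk[OF i(2)] by (simp add: hom0_gap_def)
qed

lemma coboundary_direct_arrow:
  assumes g: "hom0 ls g" and cob: "equivA ls R (lincomb S c (elem ls)) (D0 ls g)"
    and S: "\<And>j. j \<in> S \<Longrightarrow> valid_idx j" and u: "u < a"
  obtains lam where
    "\<And>q. q < a \<Longrightarrow> (\<Sum>j\<in>S. c j * direct_coeff j u q) = (if q = u then hom0_gap g else 0)"
    "\<And>q. q < len \<Longrightarrow> \<not> has_mon Mon q
      \<Longrightarrow> (\<Sum>j\<in>S. c j * direct_coeff j u q) - (if q = u then hom0_gap g else 0) = (\<Sum>t<nr. lam t * b t q)"
proof -
  let ?d = "\<lambda>p. lincomb S c (elem ls) (u, 0) p - D0 ls g (u, 0) p"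
  have ul: "u < len" "ls ! u = 1" using u blocks_length direct_branch_length by auto
  then have I: "inI ls R ?d"
    using cob unfolding equivA_def by (simp add: arrows_iff)
  have val: "?d (br ls q) = (\<Sum>j\<in>S. c j * direct_coeff j u q) - (if q = u then hom0_gap g else 0)"
    if "q < len" for q
  proof -
    have "vtx ls u (Suc 0) = Snk" using ul by (simp add: vtx_def)
    then have "D0 ls g (u, 0) (br ls q) = (if q = u then hom0_gap g else 0)"
      using D0_arrow[OF g ul(1), of 0] ul direct_branch_length[of q] that
      by (auto simp: delta_apply vtx_Src hom0_gap_def)
    then show ?thesis using lincomb_direct_branch[OF S u that] by simp
  qed
  obtain lam where lam: "\<And>q. q < len \<Longrightarrow> \<not> has_mon Mon q \<Longrightarrow> ?d (br ls q) = (\<Sum>t<nr. lam t * b t q)"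
    using ideal_branch_coeffs[OF I] by blast
  show ?thesis
  proof (rule that[of lam])
    fix q assume q: "q < a"
    then have ql: "q < len" and "br ls q = Pth q 0 (Suc 0)"
      using blocks_length direct_branch_length by auto
    then have "?d (br ls q) = 0" using ideal_arrow_coeff[OF I, of q 0] by simp
    then show "(\<Sum>j\<in>S. c j * direct_coeff j u q) = (if q = u then hom0_gap g else 0)"
      using val[OF ql] by (simp add: right_minus_eq)
  qed (use lam val in simp)
qed

context
  fixes c :: "idx \<Rightarrow> 'k" and g :: "vert \<Rightarrow> 'k kq"
  assumes g: "hom0 ls g" and cob: "equivA ls R (lincomb Spos c (elem ls)) (D0 ls g)"
begin

lemma coboundary_Wi: "u < a \<Longrightarrow> q < a \<Longrightarrow> q \<noteq> u \<Longrightarrow> c (Wi u q) = 0"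
  using coboundary_direct_arrow[OF g cob idx_pos_valid] direct_sum_offdiag by metis

lemma coboundary_Xi: "0 < u \<Longrightarrow> u < a \<Longrightarrow> c (Xi u) = hom0_gap g"
  using coboundary_direct_arrow[OF g cob idx_pos_valid] direct_sum_diag by (metis less_imp_neq)

text \<open>On the loop at alpha^(0) the relations give -(a-1) e = e for e = hom0_gap g; this is where the
  characteristic of k matters.\<close>

lemma coboundary_gap_zero:
  assumes "0 < a"
  shows "hom0_gap g = 0"
proof -
  let ?e = "hom0_gap g"
  have "- (\<Sum>u\<in>{1..<a}. c (Xi u)) = ?e"
    using coboundary_direct_arrow[OF g cob idx_pos_valid assms] direct_sum_diag0 by (metis assms)
  moreover have "(\<Sum>u\<in>{1..<a}. c (Xi u)) = of_nat (a - 1) * ?e"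
    using coboundary_Xi by (simp add: sum.cong[of _ _ _ "\<lambda>_. ?e"])
  ultimately have "of_nat (a - 1) * ?e + ?e = 0" by (simp add: neg_eq_iff_add_eq_0)
  then have "(of_nat (a - 1) + 1) * ?e = 0" by (simp add: distrib_right)
  moreover have "(of_nat (a - 1) + 1 :: 'k) = of_nat a" using assms by (simp add: of_nat_diff)
  ultimately show ?thesis using assms by simp
qed

lemma coboundary_Zi:
  assumes "Zi u s \<in> Spos"
  shows "c (Zi u s) = 0"
proof -
  have u: "u < a" and s: "a \<le> s" "s \<in> B0w ls Mon nr kp" using assms Zi_in_Spos by auto
  obtain lam where lam: "\<And>q. q < len \<Longrightarrow> \<not> has_mon Mon q \<Longrightarrow>
      (\<Sum>j\<in>Spos. c j * direct_coeff j u q) - (if q = u then hom0_gap g else 0) = (\<Sum>t<nr. lam t * b t q)"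
    using coboundary_direct_arrow[OF g cob idx_pos_valid u] by blast
  have "lam t = 0" if t: "t < nr" for t
  proof -
    have "kp t \<notin> B0w ls Mon nr kp" using t by (auto simp: B0w_def)
    moreover have "a \<le> kp t" using b_nonzero_branch[OF t, of "kp t"] b_pivot[OF t] by simp
    ultimately have "(\<Sum>j\<in>Spos. c j * direct_coeff j u (kp t)) = 0"
      using direct_sum_long[OF u, of "kp t" c] by simp
    moreover have "kp t \<noteq> u" using \<open>a \<le> kp t\<close> u by simp
    ultimately show ?thesis
      using lam[of "kp t"] pivot_branch[OF t] sum_pivot_column[OF t] by simp
  qed
  then show ?thesis
    using lam[of s] s u direct_sum_long[OF u s(1), of c] by (auto simp: B0w_def)
qed

lemma independent_pos: "0 < a \<Longrightarrow> j \<in> Spos \<Longrightarrow> c j = 0"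
proof -
  assume a: "0 < a" and j: "j \<in> Spos"
  note gap = coboundary_gap_zero[OF a]
  show "c j = 0"
  proof (cases j)
    case (Yi i)
    then obtain i' where "a \<le> i'" "i' < len" "j = branch_idx i'"
      using valid_idx_branch_idx idx_pos_valid[OF j] by blast
    then show ?thesis
      using coboundary_long_branch[OF g cob finite_idx_pos idx_pos_valid] branch_idx_in_Spos gap by simp
  next
    case (Ti K)
    then obtain i' where "a \<le> i'" "i' < len" "j = branch_idx i'"
      using valid_idx_branch_idx idx_pos_valid[OF j] by blast
    then show ?thesis
      using coboundary_long_branch[OF g cob finite_idx_pos idx_pos_valid] branch_idx_in_Spos gap by simp
  qed (use j idx_pos_valid[OF j] coboundary_Wi coboundary_Xi coboundary_Zi gap in \<open>auto simp: valid_idx_def\<close>)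
qed

end

lemma hasB_branch_idx_last: "hasB ls (branch_idx (len - 1))"
  by (auto simp: branch_idx_def)

text \<open>Without arrows from 0 to omega the gap is detected by the last branch, whose basis element
  is the one left out of Szero.\<close>

lemma independent_zero:
  assumes a: "a = 0" and g: "hom0 ls g" and cob: "equivA ls R (lincomb Szero c (elem ls)) (D0 ls g)"
    and j: "j \<in> Szero"
  shows "c j = 0"
proof -
  have last: "len - 1 < len" using len_pos by simp
  have "branch_idx (len - 1) \<notin> Szero" unfolding idx_zero_def using hasB_branch_idx_last by simp
  then have gap: "hom0_gap g = 0"
    using coboundary_long_branch[OF g cob finite_idx_zero idx_zero_valid _ last] a by simp
  have "(\<exists>i. j = Yi i) \<or> (\<exists>K. j = Ti K)" using j unfolding idx_zero_def by auto
  then obtain i where "a \<le> i" "i < len" "j = branch_idx i"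
    using valid_idx_branch_idx idx_zero_valid[OF j] by blast
  then show ?thesis
    using coboundary_long_branch[OF g cob finite_idx_zero idx_zero_valid, of i] j gap by simp
qed

section \<open>Every cocycle is cohomologous to a combination of basis elements\<close>

context
  fixes f :: "'k hom1"
  assumes ker_f: "kerD1 ls R f"
begin

lemma hom1_f: "hom1 ls f"
  using ker_f unfolding kerD1_def by blast

text \<open>Applying the cocycle condition to rho_s and reading off the pivot coefficients of the
  resulting element of I.\<close>

lemma bsum_pivot:
  assumes s: "s < nr" and bi: "b s i \<noteq> 0"
  shows "bsum f i = bsum f (kp s)"
proof -
  have "rho ls b s \<in> R" using s unfolding rels_def by auto
  then have "inI ls R (D1 ls f (rho ls b s))" using ker_f unfolding kerD1_def by blast
  then have "inI ls R (\<lambda>q. \<Sum>k<len. b s k * bsum f k * branch ls k q)"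
    unfolding D1_rho[OF hom1_f s] .
  then obtain lam where lam: "\<And>i. i < len \<Longrightarrow> \<not> has_mon Mon i \<Longrightarrow>
      (\<Sum>k<len. b s k * bsum f k * branch ls k (br ls i)) = (\<Sum>t<nr. lam t * b t i)"
    using ideal_branch_coeffs by blast
  have diag: "(\<Sum>k<len. b s k * bsum f k * branch ls k (br ls i)) = b s i * bsum f i" if "i < len" for i
  proof -
    have "(\<Sum>k<len. b s k * bsum f k * branch ls k (br ls i)) = (\<Sum>k<len. if k = i then b s k * bsum f k else 0)"
      using that by (intro sum.cong) (auto simp: branch_br)
    then show ?thesis using that by simp
  qed
  have lam_t: "lam t = (if t = s then bsum f (kp s) else 0)" if t: "t < nr" for t
  proof -
    have "b s (kp t) * bsum f (kp t) = lam t"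
      using lam[of "kp t"] diag pivot_branch[OF t] sum_pivot_column[OF t, of lam] by simp
    then show ?thesis using b_pivot b_pivot_column[OF t s] s by (cases "t = s") auto
  qed
  have i: "i < len" "\<not> has_mon Mon i" using b_nonzero_branch[OF s bi] by auto
  have "b s i * bsum f i = (\<Sum>t<nr. lam t * b t i)" using lam[OF i] diag[OF i(1)] by simp
  also have "\<dots> = (\<Sum>t<nr. if t = s then bsum f (kp s) * b t i else 0)"
    using lam_t by (intro sum.cong) auto
  also have "\<dots> = bsum f (kp s) * b s i" using s by simp
  finally show ?thesis using bi by (simp add: mult.commute)
qed

lemma bsum_component: "(i, k) \<in> E\<^sup>* \<Longrightarrow> bsum f i = bsum f k"
proof (induction rule: rtrancl_induct)
  case (step y z)
  then obtain s where s: "s < nr" "b s y \<noteq> 0" "b s z \<noteq> 0" unfolding Erho_def by blast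
  then show ?case using step.IH bsum_pivot[OF s(1,2)] bsum_pivot[OF s(1,3)] by simp
qed simp

text \<open>The coboundary of pot agrees with f on every arrow of a long branch except the first one; its
  value sink_val at omega is the part of the loop coefficients of f that no basis element absorbs.\<close>

definition dcoef :: "nat \<Rightarrow> nat \<Rightarrow> 'k" where "dcoef p q = f (p, 0) (br ls q)"

definition sink_val :: 'k where
  "sink_val = (if 0 < a then (\<Sum>p<a. dcoef p p) / of_nat a else bsum f (len - 1))"

definition coord :: "idx \<Rightarrow> 'k" where "coord j = (case j of
    Yi i \<Rightarrow> bsum f i - sink_val
  | Ti K \<Rightarrow> bsum f (SOME i. i \<in> K) - sink_val
  | Wi p q \<Rightarrow> dcoef p q
  | Zi u s \<Rightarrow> dcoef u s - (\<Sum>t<nr. dcoef u (kp t) * b t s)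
  | Xi j \<Rightarrow> dcoef j j - sink_val)"

definition pot :: "vert \<Rightarrow> 'k" where "pot x = (case x of
    Src \<Rightarrow> 0
  | Snk \<Rightarrow> sink_val
  | Mid i j \<Rightarrow> (\<Sum>h<j. acoef f i h) - (bsum f i - sink_val))"

definition pot_map :: "vert \<Rightarrow> 'k kq" where
  "pot_map x = (if x \<in> verts ls then (\<lambda>p. pot x * delta (Triv x) p) else (\<lambda>p. 0))"

lemma coord_branch_idx: "a \<le> i \<Longrightarrow> i < len \<Longrightarrow> coord (branch_idx i) = bsum f i - sink_val"
proof (cases "has_mon Mon i")
  case False
  have "(i, SOME k. k \<in> E\<^sup>* `` {i}) \<in> E\<^sup>*"
    using someI[of "\<lambda>k. k \<in> E\<^sup>* `` {i}" i] by simp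
  then show ?thesis using False bsum_component by (simp add: branch_idx_def coord_def)
qed (simp add: branch_idx_def coord_def)

lemma hom0_pot_map: "hom0 ls pot_map"
  unfolding hom0_def pot_map_def by (auto simp: in_eAe_def delta_apply Triv_in_paths)

lemma pot_map_vertex: "x \<in> verts ls \<Longrightarrow> pot_map x (Triv x) = pot x"
  by (simp add: pot_map_def delta_apply)

lemma D0_pot_map_long:
  assumes "a \<le> i" "i < len" "h < ls ! i"
  shows "D0 ls pot_map (i, h) p
    = (acoef f i h - (if h = 0 then bsum f i - sink_val else 0)) * delta (Pth i h (Suc h)) p"
proof -
  have v: "vtx ls i (Suc h) \<in> verts ls" "vtx ls i h \<in> verts ls" using assms by (auto intro!: vtx_in_verts)
  have pot_vtx: "pot (vtx ls i j) = (\<Sum>h<j. acoef f i h) - (if j = 0 then 0 else bsum f i - sink_val)"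
    if "j \<le> ls ! i" for j
    using that assms branch_length_pos[OF assms(2)] by (auto simp: vtx_def pot_def)
  have "pot (vtx ls i (Suc h)) - pot (vtx ls i h) = acoef f i h - (if h = 0 then bsum f i - sink_val else 0)"
    unfolding pot_vtx[OF Suc_leI[OF assms(3)]] pot_vtx[OF less_imp_le[OF assms(3)]]
    by (cases "h = 0") (simp_all add: algebra_simps)
  then show ?thesis
    unfolding D0_arrow[OF hom0_pot_map assms(2,3)] pot_map_vertex[OF v(1)] pot_map_vertex[OF v(2)] by simp
qed

lemma D0_pot_map_direct:
  assumes "u < a"
  shows "D0 ls pot_map (u, 0) x = sink_val * delta (br ls u) x"
proof -
  have u: "u < len" "ls ! u = 1" using assms blocks_length direct_branch_length by auto
  then have "vtx ls u (Suc 0) = Snk" "vtx ls u 0 = Src" "0 < ls ! u" by (auto simp: vtx_def)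
  then show ?thesis
    unfolding D0_arrow[OF hom0_pot_map u(1) \<open>0 < ls ! u\<close>] using u pot_map_vertex[OF Snk_verts] pot_map_vertex[OF Src_verts]
    by (simp add: pot_def)
qed

lemma span_long_arrow:
  assumes S: "finite S" "\<And>j. j \<in> S \<Longrightarrow> valid_idx j"
    and coord: "\<And>i. a \<le> i \<Longrightarrow> i < len \<Longrightarrow> (if branch_idx i \<in> S then coord (branch_idx i) else 0) = bsum f i - sink_val"
    and i: "a \<le> i" "i < len" "h < ls ! i"
  shows "inI ls R (\<lambda>p. f (i, h) p - (lincomb S coord (elem ls) (i, h) p + D0 ls pot_map (i, h) p))"
proof -
  have "f (i, h) p - (lincomb S coord (elem ls) (i, h) p + D0 ls pot_map (i, h) p) = 0" for p
  proof -
    have "f (i, h) p = acoef f i h * delta (Pth i h (Suc h)) p"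
      by (subst hom1_long_arrow[OF hom1_f i(2) long_branch_length[OF i(1,2)] i(3)]) simp
    moreover have "lincomb S coord (elem ls) (i, h) p = (if h = 0 \<and> p = Pth i 0 1 then bsum f i - sink_val else 0)"
      using lincomb_long_arrow[OF S i(1,2), of coord h p] coord[OF i(1,2)] by (auto split: if_splits)
    ultimately show ?thesis
      unfolding D0_pot_map_long[OF i] by (cases "h = 0"; cases "p = Pth i h (Suc h)") (simp_all add: delta_apply)
  qed
  then show ?thesis using inI_zero by simp
qed

text \<open>The part of f(alpha^(u)) not accounted for by the chosen combination and coboundary: the
  coefficients on the branches with monomial relations and on the pivot branches, which together form
  an element of I.\<close>

definition resid :: "nat \<Rightarrow> nat \<Rightarrow> 'k" where
  "resid u q = (if has_mon Mon q then dcoef u q else 0) + (\<Sum>t<nr. dcoef u (kp t) * b t q)"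

lemma sum_coord_diag0:
  assumes "0 < a"
  shows "(\<Sum>j\<in>Spos. coord j * direct_coeff j 0 0) = dcoef 0 0 - sink_val"
proof -
  have "(\<Sum>p<a. dcoef p p) = dcoef 0 0 + (\<Sum>u\<in>{1..<a}. dcoef u u)"
    using assms by (simp add: sum.atLeast1_atMost_eq[symmetric] atLeast0LessThan[symmetric]
        sum.atLeast_Suc_lessThan)
  moreover have "of_nat a * sink_val = (\<Sum>p<a. dcoef p p)"
    using assms by (simp add: sink_val_def)
  ultimately have avg: "of_nat a * sink_val = dcoef 0 0 + (\<Sum>u\<in>{1..<a}. dcoef u u)"
    by simp
  have "of_nat (a - 1) * sink_val - (\<Sum>u\<in>{1..<a}. dcoef u u)
      = (of_nat a * sink_val - sink_val) - (\<Sum>u\<in>{1..<a}. dcoef u u)"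
    using assms by (simp add: of_nat_diff algebra_simps)
  also have "\<dots> = dcoef 0 0 - sink_val"
    unfolding avg by (simp add: algebra_simps)
  finally have "of_nat (a - 1) * sink_val - (\<Sum>u\<in>{1..<a}. dcoef u u) = dcoef 0 0 - sink_val" .
  moreover have "(\<Sum>j\<in>Spos. coord j * direct_coeff j 0 0) = of_nat (a - 1) * sink_val - (\<Sum>u\<in>{1..<a}. dcoef u u)"
    unfolding direct_sum_diag0 by (simp add: coord_def sum_subtractf)
  ultimately show ?thesis by simp
qed

lemma direct_resid_short:
  assumes "0 < a" "u < a" "q < a"
  shows "dcoef u q - ((\<Sum>j\<in>Spos. coord j * direct_coeff j u q) + (if q = u then sink_val else 0)) = 0"
proof -
  consider "q \<noteq> u" | "q = u" "0 < u" | "q = u" "u = 0" by auto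
  then show ?thesis
  proof cases
    case 1
    then show ?thesis using direct_sum_offdiag[OF assms(2,3) 1, of coord] by (simp add: coord_def)
  next
    case 2
    then show ?thesis using direct_sum_diag[OF 2(2) assms(2), of coord] by (simp add: coord_def)
  next
    case 3
    then show ?thesis using sum_coord_diag0[OF assms(1)] by simp
  qed
qed

lemma direct_resid_long:
  assumes "u < a" "a \<le> q" "q < len"
  shows "dcoef u q - (\<Sum>j\<in>Spos. coord j * direct_coeff j u q) = resid u q"
proof -
  have sum: "(\<Sum>j\<in>Spos. coord j * direct_coeff j u q) = (if q \<in> B0w ls Mon nr kp then coord (Zi u q) else 0)"
    by (rule direct_sum_long[OF assms(1,2)])
  consider "has_mon Mon q" | t0 where "\<not> has_mon Mon q" "t0 < nr" "q = kp t0"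
    | "\<not> has_mon Mon q" "q \<notin> kp ` {..<nr}" by blast
  then show ?thesis
  proof cases
    case 1
    then have "b t q = 0" if "t < nr" for t using b_nonzero_branch[OF that] by blast
    then show ?thesis using 1 sum by (simp add: resid_def B0w_def)
  next
    case 2
    then have "(\<Sum>t<nr. dcoef u (kp t) * b t q) = dcoef u q"
      using sum_pivot_column[of t0 "\<lambda>t. dcoef u (kp t)"] by simp
    then show ?thesis using 2 sum by (simp add: resid_def B0w_def)
  next
    case 3
    then show ?thesis using assms(3) sum by (simp add: resid_def B0w_def coord_def)
  qed
qed

lemma inI_resid: "inI ls R (\<lambda>x. \<Sum>q<len. resid u q * branch ls q x)"
proof -
  have "(\<Sum>q<len. resid u q * branch ls q x) =
      (\<Sum>q<len. (if has_mon Mon q then dcoef u q else 0) * branch ls q x) + (\<Sum>t<nr. dcoef u (kp t) * rho ls b t x)" for x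
  proof -
    have "(\<Sum>q<len. (\<Sum>t<nr. dcoef u (kp t) * b t q) * branch ls q x) = (\<Sum>t<nr. dcoef u (kp t) * rho ls b t x)"
      unfolding rho_apply
      by (simp add: sum_distrib_right sum_distrib_left sum.swap[where A="{..<len}"] mult.assoc)
    then show ?thesis unfolding resid_def by (simp add: distrib_right sum.distrib)
  qed
  moreover have "inI ls R (\<lambda>x. (if has_mon Mon q then dcoef u q else 0) * branch ls q x)" for q
    using inI_smult[OF inI_branch_mon] inI_zero[of ls R] by (cases "has_mon Mon q") simp_all
  moreover have "inI ls R (\<lambda>x. dcoef u (kp t) * rho ls b t x)" if "t \<in> {..<nr}" for t
    using inI_smult[OF inI_rho] that by simp
  ultimately show ?thesis
    by (simp only:) (intro inI_add inI_sum; simp)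
qed

lemma span_direct_arrow:
  assumes a: "0 < a" and u: "u < a"
  shows "inI ls R (\<lambda>x. f (u, 0) x - (lincomb Spos coord (elem ls) (u, 0) x + D0 ls pot_map (u, 0) x))"
proof -
  have "f (u, 0) x - (lincomb Spos coord (elem ls) (u, 0) x + D0 ls pot_map (u, 0) x)
      = (\<Sum>q<len. resid u q * branch ls q x)" for x
  proof (cases "\<exists>q<len. x = br ls q")
    case True
    then obtain q where q: "q < len" "x = br ls q" by blast
    have "(\<Sum>q'<len. resid u q' * branch ls q' x) = (\<Sum>q'<len. if q' = q then resid u q' else 0)"
      using q by (intro sum.cong) (auto simp: branch_br)
    moreover have "resid u q = 0" if "q < a"
      using that b_vanishes has_mon_long by (fastforce simp: resid_def)
    ultimately show ?thesis
      using q direct_resid_short[OF a u, of q] direct_resid_long[OF u _ q(1)]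
        lincomb_direct_branch[OF idx_pos_valid u q(1), where c = coord] D0_pot_map_direct[OF u] u
      by (cases "q < a") (auto simp: dcoef_def delta_apply)
  next
    case False
    have "f (u, 0) x = 0"
      by (subst hom1_direct_arrow[OF hom1_f u]) (use False in \<open>auto simp: branch_apply intro!: sum.neutral\<close>)
    moreover have "lincomb Spos coord (elem ls) (u, 0) x = 0"
      unfolding lincomb_def using False by (auto intro!: sum.neutral simp: elem_direct_nonbranch[OF idx_pos_valid u])
    moreover have "(\<Sum>q<len. resid u q * branch ls q x) = 0"
      using False by (auto simp: branch_apply intro!: sum.neutral)
    moreover have "u < len" using u blocks_length by simp
    ultimately show ?thesis using False D0_pot_map_direct[OF u] by (auto simp: delta_apply)
  qed
  then show ?thesis using inI_resid by simp
qed

lemma coord_branch_pos: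
  "a \<le> i \<Longrightarrow> i < len \<Longrightarrow> (if branch_idx i \<in> Spos then coord (branch_idx i) else 0) = bsum f i - sink_val"
  using branch_idx_in_Spos coord_branch_idx by simp

lemma coord_branch_zero:
  assumes a: "a = 0" and i: "i < len"
  shows "(if branch_idx i \<in> Szero then coord (branch_idx i) else 0) = bsum f i - sink_val"
proof (cases "branch_idx i \<in> Szero")
  case True
  then show ?thesis using coord_branch_idx a i by simp
next
  case False
  have "branch_idx i \<in> Yi ` {i. i < len \<and> has_mon Mon i} \<union> Ti ` Comps"
  proof (cases "has_mon Mon i")
    case False
    then have "E\<^sup>* `` {i} \<in> Comps" using Vrho_iff_long[of i] a i by (auto simp: Comps_iff)
    then show ?thesis using False by (simp add: branch_idx_def)
  qed (use i in \<open>simp add: branch_idx_def\<close>)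
  then have "hasB ls (branch_idx i)" using False unfolding idx_zero_def by blast
  then have "covers (branch_idx i) (len - 1)"
    by (auto simp: branch_idx_def split: if_splits)
  moreover have last: "a \<le> len - 1" "len - 1 < len" using a len_pos by auto
  ultimately have "branch_idx i = branch_idx (len - 1)"
    using covers_iff branch_idx_valid a i by blast
  then have "bsum f i = bsum f (len - 1)"
    using coord_branch_idx[of i] coord_branch_idx[OF last] a i by simp
  then show ?thesis using False a unfolding sink_val_def by simp
qed

lemma span_pos:
  assumes "0 < a"
  shows "equivA ls R f (\<lambda>\<gamma> p. lincomb Spos coord (elem ls) \<gamma> p + D0 ls pot_map \<gamma> p)"
  unfolding equivA_def
proof
  fix \<gamma> assume "\<gamma> \<in> arrows ls"
  then obtain i h where \<gamma>: "\<gamma> = (i, h)" "i < len" "h < ls ! i" by (cases \<gamma>) (auto simp: arrows_iff)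
  show "inI ls R (\<lambda>p. f \<gamma> p - (lincomb Spos coord (elem ls) \<gamma> p + D0 ls pot_map \<gamma> p))"
  proof (cases "a \<le> i")
    case True
    then show ?thesis
      using span_long_arrow[OF finite_idx_pos idx_pos_valid coord_branch_pos True \<gamma>(2,3)] \<gamma>(1) by simp
  next
    case False
    then show ?thesis using span_direct_arrow[OF assms, of i] \<gamma> direct_branch_length by simp
  qed
qed

lemma span_zero:
  assumes "a = 0"
  shows "equivA ls R f (\<lambda>\<gamma> p. lincomb Szero coord (elem ls) \<gamma> p + D0 ls pot_map \<gamma> p)"
  unfolding equivA_def
proof
  fix \<gamma> assume "\<gamma> \<in> arrows ls"
  then obtain i h where \<gamma>: "\<gamma> = (i, h)" "i < len" "h < ls ! i" by (cases \<gamma>) (auto simp: arrows_iff)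
  then show "inI ls R (\<lambda>p. f \<gamma> p - (lincomb Szero coord (elem ls) \<gamma> p + D0 ls pot_map \<gamma> p))"
    using span_long_arrow[OF finite_idx_zero idx_zero_valid coord_branch_zero[OF assms]] assms by simp
qed

end

lemma basis_pos: "0 < a \<Longrightarrow> classes_basis ls R Spos (elem ls)"
  unfolding classes_basis_def
  using finite_idx_pos kerD1_elem[OF idx_pos_valid] independent_pos hom0_pot_map span_pos by blast

lemma basis_zero: "a = 0 \<Longrightarrow> classes_basis ls R Szero (elem ls)"
  unfolding classes_basis_def
  using finite_idx_zero kerD1_elem[OF idx_zero_valid] independent_zero hom0_pot_map span_zero by blast

end

theorem theorem3p5:
  fixes ls :: "nat list" and Mon :: "(nat \<times> nat \<times> nat) set" and nr :: nat
    and b :: "nat \<Rightarrow> nat \<Rightarrow> 'k::field_char_0" and kp :: "nat \<Rightarrow> nat"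
    and a l m n :: nat
  assumes "toupie_pres ls Mon nr b kp a l m n"
  shows "(0 < a \<longrightarrow> classes_basis ls (rels ls Mon nr b) (idx_pos ls Mon nr b kp a) (elem ls))
       \<and> (a = 0 \<longrightarrow> classes_basis ls (rels ls Mon nr b) (idx_zero ls Mon nr b) (elem ls))"
proof -
  interpret toupie ls Mon nr b kp a l m n
    using assms by (rule toupie.intro)
  show ?thesis using basis_pos basis_zero by blast
qed

end
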